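(* Let $S^0$ be an adequate semigroup with semilattice of idempotents $E^0$. Let $I=\bigcup_{x\in E^0}L_x$ be a left regular band and $\Lambda=\bigcup_{x\in E^0}R_x$ a right regular band having $E^0$ as a common semilattice transversal. Suppose that for each $x,y\in S^0$ there are mappings $\alpha_{x,y}:R_{x^\ast}\times L_{y^+}\to L_{(xy)^+}$ and $\beta_{x,y}:R_{x^\ast}\times L_{y^+}\to R_{(xy)^\ast}$ satisfying: 1. if $f\in R_{x^\ast}$, $g\in L_{y^+}$, $h\in R_{y^\ast}$, $k\in L_{z^+}$ ($x,y,z\in S^0$) then $(f,g)\alpha_{x,y}\,\big((f,g)\beta_{x,y}h,k\big)\alpha_{xy,z}=\big(f,g\,(h,k)\alpha_{y,z}\big)\alpha_{x,yz}$ and $\big(f,g\,(h,k)\alpha_{y,z}\big)\beta_{x,yz}\,(h,k)\beta_{y,z}=\big((f,g)\beta_{x,y}h,k\big)\beta_{xy,z}$; 2. $(x^\ast,y^+)\alpha_{x,y}=(xy)^+$ and $(x^\ast,y^+)\beta_{x,y}=(xy)^\ast$; 3. if $x,x_1,x_2\in S^0$, $e_1\in L_{x_1^+}$, $f_1\in R_{x_1^\ast}$, $e_2\in L_{x_2^+}$, $f_2\in R_{x_2^\ast}$, $e\in L_{x^+}$ and $e_1(f_1,e)\alpha_{x_1,x}=e_2(f_2,e)\alpha_{x_2,x}$, $x_1x=x_2x$ and $(f_1,e)\beta_{x_1,x}x^\ast=(f_2,e)\beta_{x_2,x}x^\ast$, then $e_1(f_1,e)\alpha_{x_1,x^+}=e_2(f_2,e)\alpha_{x_2,x^+}$,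 $x_1x^+=x_2x^+$ and $(f_1,e)\beta_{x_1,x^+}=(f_2,e)\beta_{x_2,x^+}$; 4. if $x,x_1,x_2\in S^0$, $e_1\in L_{x_1^+}$, $f_1\in R_{x_1^\ast}$, $e_2\in L_{x_2^+}$, $f_2\in R_{x_2^\ast}$, $f\in R_{x^\ast}$ and $x^+(f,e_1)\alpha_{x,x_1}=x^+(f,e_2)\alpha_{x,x_2}$, $xx_1=xx_2$ and $(f,e_1)\beta_{x,x_1}f_1=(f,e_2)\beta_{x,x_2}f_2$, then $(f,e_1)\alpha_{x^\ast,x_1}=(f,e_2)\alpha_{x^\ast,x_2}$, $x^\ast x_1=x^\ast x_2$ and $(f,e_1)\beta_{x^\ast,x_1}f_1=(f,e_2)\beta_{x^\ast,x_2}f_2$. Define on $W=\{(e,x,f)\in I\times S^0\times\Lambda: e\in L_{x^+},\ f\in R_{x^\ast}\}$ the multiplication $(e,x,f)(g,y,h)=\big(e(f,g)\alpha_{x,y},\,xy,\,(f,g)\beta_{x,y}h\big)$. Then $W$ is a quasi-adequate semigroup with an admissible adequate transversal isomorphic to $S^0$. If moreover 5. for all $f\in\Lambda$, $e\in I$: $(f^0,e)\alpha_{f^0,e^0}=f^0e$ and $(f,e^0)\beta_{f^0,e^0}=fe^0$, then $I(W)\cong I$ and $\Lambda(W)\cong\Lambda$. Moreover, every quasi-adequate semigroup with an admissible adequate transversal can be constructed (up to isomorphism) in this way.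
   Context: For a semigroup $S$, $S^1$ is $S$ with an identity adjoined, $E(S)$ its set of idempotents, $\mathcal{L},\mathcal{R}$ Green's relations. $\mathcal{R}^\ast=\{(a,b):\forall x,y\in S^1,\ xa=ya\iff xb=yb\}$ and $\mathcal{L}^\ast=\{(a,b):\forall x,y\in S^1,\ ax=ay\iff bx=by\}$. $S$ is abundant if every $\mathcal{R}^\ast$-class and every $\mathcal{L}^\ast$-class contains an idempotent; an abundant semigroup with commuting idempotents is adequate, and then $a^+$ (resp. $a^\ast$) denotes the unique idempotent $\mathcal{R}^\ast$-related (resp. $\mathcal{L}^\ast$-related) to $a$. An abundant subsemigroup $U$ of an abundant $S$ is a $\ast$-subsemigroup if $\mathcal{L}^\ast(U)=\mathcal{L}^\ast(S)\cap(U\times U)$ and $\mathcal{R}^\ast(U)=\mathcal{R}^\ast(S)\cap(U\times U)$. An adequate $\ast$-subsemigroup $S^0$ of an abundant semigroup $S$ is an adequate transversal if for each $x\in S$ there are a unique $\overline{x}\in S^0$ and idempotents $e,f$ of $S$ with $x=e\overline{x}f$, $e\,\mathcal{L}\,\overline{x}^+$, $f\,\mathcal{R}\,\overline{x}^\ast$; these $e,f$ are unique and written $e_x,f_x$; $I(S)=\{e_x:x\in S\}$, $\Lambda(S)=\{f_x:x\in S\}$ (so $I(W),\Lambda(W)$ refer to $W$ and its transversal). A semigroup is quasi-adequate if it is abundant and its idempotents form a subsemigroup; an adequate transversal of a quasi-adequate semigroup is admissible if $\overline{xy}=\overline{x}\,\overline{y}$ for all $x,y$. A left (right) regular band is a band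 with $xyx=xy$ ($xyx=yx$). $E^0$ is a semilattice transversal of a band $B$ if $E^0$ is a subsemilattice of $B$ and each $e\in B$ has exactly one inverse $e^0$ in $E^0$; "common" means $E^0\subseteq I\cap\Lambda$ with this property in both. For $x\in E^0$, $L_x$ is the $\mathcal{L}$-class of $x$ in $I$ and $R_x$ the $\mathcal{R}$-class of $x$ in $\Lambda$. Products such as $g\,(h,k)\alpha_{y,z}$, $e_1(f_1,e)\alpha$ are taken in $I$, and $(f,g)\beta_{x,y}h$, $(f_1,e)\beta x^\ast$ in $\Lambda$. *)

theory Defs
  imports Main
begin

definition sgrp :: "'a set \<Rightarrow> ('a \<Rightarrow> 'a \<Rightarrow> 'a) \<Rightarrow> bool" where
  "sgrp S m \<longleftrightarrow> (\<forall>x\<in>S. \<forall>y\<in>S. m x y \<in> S) \<and>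
     (\<forall>x\<in>S. \<forall>y\<in>S. \<forall>z\<in>S. m (m x y) z = m x (m y z))"

definition idems :: "'a set \<Rightarrow> ('a \<Rightarrow> 'a \<Rightarrow> 'a) \<Rightarrow> 'a set" where
  "idems S m = {e\<in>S. m e e = e}"

text \<open>Elements of S^1: None is the adjoined identity.\<close>
definition S1 :: "'a set \<Rightarrow> 'a option set" where
  "S1 S = insert None (Some ` S)"

definition lmul1 :: "('a \<Rightarrow> 'a \<Rightarrow> 'a) \<Rightarrow> 'a option \<Rightarrow> 'a \<Rightarrow> 'a" where
  "lmul1 m u a = (case u of None \<Rightarrow> a | Some x \<Rightarrow> m x a)"

definition rmul1 :: "('a \<Rightarrow> 'a \<Rightarrow> 'a) \<Rightarrow> 'a \<Rightarrow> 'a option \<Rightarrow> 'a" where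
  "rmul1 m a u = (case u of None \<Rightarrow> a | Some x \<Rightarrow> m a x)"

definition GL :: "'a set \<Rightarrow> ('a \<Rightarrow> 'a \<Rightarrow> 'a) \<Rightarrow> 'a \<Rightarrow> 'a \<Rightarrow> bool" where
  "GL S m a b \<longleftrightarrow> a \<in> S \<and> b \<in> S \<and>
     (\<exists>u\<in>S1 S. a = lmul1 m u b) \<and> (\<exists>u\<in>S1 S. b = lmul1 m u a)"

definition GR :: "'a set \<Rightarrow> ('a \<Rightarrow> 'a \<Rightarrow> 'a) \<Rightarrow> 'a \<Rightarrow> 'a \<Rightarrow> bool" where
  "GR S m a b \<longleftrightarrow> a \<in> S \<and> b \<in> S \<and>
     (\<exists>u\<in>S1 S. a = rmul1 m b u) \<and> (\<exists>u\<in>S1 S. b = rmul1 m a u)"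

definition Rstar :: "'a set \<Rightarrow> ('a \<Rightarrow> 'a \<Rightarrow> 'a) \<Rightarrow> 'a \<Rightarrow> 'a \<Rightarrow> bool" where
  "Rstar S m a b \<longleftrightarrow> a \<in> S \<and> b \<in> S \<and>
     (\<forall>u\<in>S1 S. \<forall>v\<in>S1 S. lmul1 m u a = lmul1 m v a \<longleftrightarrow> lmul1 m u b = lmul1 m v b)"

definition Lstar :: "'a set \<Rightarrow> ('a \<Rightarrow> 'a \<Rightarrow> 'a) \<Rightarrow> 'a \<Rightarrow> 'a \<Rightarrow> bool" where
  "Lstar S m a b \<longleftrightarrow> a \<in> S \<and> b \<in> S \<and>
     (\<forall>u\<in>S1 S. \<forall>v\<in>S1 S. rmul1 m a u = rmul1 m a v \<longleftrightarrow> rmul1 m b u = rmul1 m b v)"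

definition abundant :: "'a set \<Rightarrow> ('a \<Rightarrow> 'a \<Rightarrow> 'a) \<Rightarrow> bool" where
  "abundant S m \<longleftrightarrow> sgrp S m \<and>
     (\<forall>a\<in>S. (\<exists>e\<in>idems S m. Rstar S m a e) \<and> (\<exists>e\<in>idems S m. Lstar S m a e))"

definition adequate :: "'a set \<Rightarrow> ('a \<Rightarrow> 'a \<Rightarrow> 'a) \<Rightarrow> bool" where
  "adequate S m \<longleftrightarrow> abundant S m \<and> (\<forall>e\<in>idems S m. \<forall>f\<in>idems S m. m e f = m f e)"

text \<open>a^+ and a^* (meaningful in an adequate semigroup).\<close>
definition aplus :: "'a set \<Rightarrow> ('a \<Rightarrow> 'a \<Rightarrow> 'a) \<Rightarrow> 'a \<Rightarrow> 'a" where
  "aplus S m a = (THE e. e \<in> idems S m \<and> Rstar S m a e)"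

definition astar :: "'a set \<Rightarrow> ('a \<Rightarrow> 'a \<Rightarrow> 'a) \<Rightarrow> 'a \<Rightarrow> 'a" where
  "astar S m a = (THE e. e \<in> idems S m \<and> Lstar S m a e)"

definition star_subsgrp :: "'a set \<Rightarrow> 'a set \<Rightarrow> ('a \<Rightarrow> 'a \<Rightarrow> 'a) \<Rightarrow> bool" where
  "star_subsgrp U S m \<longleftrightarrow> U \<subseteq> S \<and> abundant U m \<and>
     (\<forall>a\<in>U. \<forall>b\<in>U. Lstar U m a b \<longleftrightarrow> Lstar S m a b) \<and>
     (\<forall>a\<in>U. \<forall>b\<in>U. Rstar U m a b \<longleftrightarrow> Rstar S m a b)"

definition decomp :: "'a set \<Rightarrow> ('a \<Rightarrow> 'a \<Rightarrow> 'a) \<Rightarrow> 'a set \<Rightarrow> 'a \<Rightarrow> 'a \<Rightarrow> 'a \<Rightarrow> 'a \<Rightarrow> bool" where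
  "decomp S m T x e xb f \<longleftrightarrow> xb \<in> T \<and> e \<in> idems S m \<and> f \<in> idems S m \<and>
     x = m (m e xb) f \<and> GL S m e (aplus T m xb) \<and> GR S m f (astar T m xb)"

definition adequate_transversal :: "'a set \<Rightarrow> ('a \<Rightarrow> 'a \<Rightarrow> 'a) \<Rightarrow> 'a set \<Rightarrow> bool" where
  "adequate_transversal S m T \<longleftrightarrow> abundant S m \<and> adequate T m \<and> star_subsgrp T S m \<and>
     (\<forall>x\<in>S. \<exists>!xb. \<exists>e f. decomp S m T x e xb f)"

definition tbar :: "'a set \<Rightarrow> ('a \<Rightarrow> 'a \<Rightarrow> 'a) \<Rightarrow> 'a set \<Rightarrow> 'a \<Rightarrow> 'a" where
  "tbar S m T x = (THE xb. \<exists>e f. decomp S m T x e xb f)"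

definition te :: "'a set \<Rightarrow> ('a \<Rightarrow> 'a \<Rightarrow> 'a) \<Rightarrow> 'a set \<Rightarrow> 'a \<Rightarrow> 'a" where
  "te S m T x = (THE e. \<exists>f. decomp S m T x e (tbar S m T x) f)"

definition tf :: "'a set \<Rightarrow> ('a \<Rightarrow> 'a \<Rightarrow> 'a) \<Rightarrow> 'a set \<Rightarrow> 'a \<Rightarrow> 'a" where
  "tf S m T x = (THE f. \<exists>e. decomp S m T x e (tbar S m T x) f)"

definition Iset :: "'a set \<Rightarrow> ('a \<Rightarrow> 'a \<Rightarrow> 'a) \<Rightarrow> 'a set \<Rightarrow> 'a set" where
  "Iset S m T = te S m T ` S"

definition Lamset :: "'a set \<Rightarrow> ('a \<Rightarrow> 'a \<Rightarrow> 'a) \<Rightarrow> 'a set \<Rightarrow> 'a set" where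
  "Lamset S m T = tf S m T ` S"

definition quasi_adequate :: "'a set \<Rightarrow> ('a \<Rightarrow> 'a \<Rightarrow> 'a) \<Rightarrow> bool" where
  "quasi_adequate S m \<longleftrightarrow> abundant S m \<and>
     (\<forall>e\<in>idems S m. \<forall>f\<in>idems S m. m e f \<in> idems S m)"

definition admissible_transversal :: "'a set \<Rightarrow> ('a \<Rightarrow> 'a \<Rightarrow> 'a) \<Rightarrow> 'a set \<Rightarrow> bool" where
  "admissible_transversal S m T \<longleftrightarrow> quasi_adequate S m \<and> adequate_transversal S m T \<and>
     (\<forall>x\<in>S. \<forall>y\<in>S. tbar S m T (m x y) = m (tbar S m T x) (tbar S m T y))"

definition sgrp_iso :: "'a set \<Rightarrow> ('a \<Rightarrow> 'a \<Rightarrow> 'a) \<Rightarrow> 'b set \<Rightarrow> ('b \<Rightarrow> 'b \<Rightarrow> 'b) \<Rightarrow> bool" where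
  "sgrp_iso A mA B mB \<longleftrightarrow> (\<exists>\<phi>. bij_betw \<phi> A B \<and>
     (\<forall>x\<in>A. \<forall>y\<in>A. \<phi> (mA x y) = mB (\<phi> x) (\<phi> y)))"

definition band :: "'a set \<Rightarrow> ('a \<Rightarrow> 'a \<Rightarrow> 'a) \<Rightarrow> bool" where
  "band B m \<longleftrightarrow> sgrp B m \<and> (\<forall>x\<in>B. m x x = x)"

definition left_regular_band :: "'a set \<Rightarrow> ('a \<Rightarrow> 'a \<Rightarrow> 'a) \<Rightarrow> bool" where
  "left_regular_band B m \<longleftrightarrow> band B m \<and> (\<forall>x\<in>B. \<forall>y\<in>B. m (m x y) x = m x y)"

definition right_regular_band :: "'a set \<Rightarrow> ('a \<Rightarrow> 'a \<Rightarrow> 'a) \<Rightarrow> bool" where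
  "right_regular_band B m \<longleftrightarrow> band B m \<and> (\<forall>x\<in>B. \<forall>y\<in>B. m (m x y) x = m y x)"

definition inverse_in :: "('a \<Rightarrow> 'a \<Rightarrow> 'a) \<Rightarrow> 'a \<Rightarrow> 'a \<Rightarrow> bool" where
  "inverse_in m a b \<longleftrightarrow> m (m a b) a = a \<and> m (m b a) b = b"

definition semilattice_transversal :: "'a set \<Rightarrow> ('a \<Rightarrow> 'a \<Rightarrow> 'a) \<Rightarrow> 'a set \<Rightarrow> bool" where
  "semilattice_transversal B m E0 \<longleftrightarrow> E0 \<subseteq> B \<and>
     (\<forall>x\<in>E0. \<forall>y\<in>E0. m x y \<in> E0 \<and> m x y = m y x) \<and>
     (\<forall>e\<in>B. \<exists>!e0. e0 \<in> E0 \<and> inverse_in m e e0)"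

definition inv0 :: "('a \<Rightarrow> 'a \<Rightarrow> 'a) \<Rightarrow> 'a set \<Rightarrow> 'a \<Rightarrow> 'a" where
  "inv0 m E0 e = (THE e0. e0 \<in> E0 \<and> inverse_in m e e0)"

definition Lcl :: "'a set \<Rightarrow> ('a \<Rightarrow> 'a \<Rightarrow> 'a) \<Rightarrow> 'a \<Rightarrow> 'a set" where
  "Lcl I mI x = {e. GL I mI e x}"

definition Rcl :: "'a set \<Rightarrow> ('a \<Rightarrow> 'a \<Rightarrow> 'a) \<Rightarrow> 'a \<Rightarrow> 'a set" where
  "Rcl L mL x = {f. GR L mL f x}"

text \<open>The data of the construction: S0 (op mS), I (op mI), Lambda (op mL), alpha, beta
  with alpha x y f g standing for (f,g) alpha_{x,y}, satisfying the standing hypotheses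
  and conditions 1--4.\<close>
definition construction_data ::
  "'a set \<Rightarrow> ('a \<Rightarrow> 'a \<Rightarrow> 'a) \<Rightarrow> 'a set \<Rightarrow> ('a \<Rightarrow> 'a \<Rightarrow> 'a) \<Rightarrow> 'a set \<Rightarrow> ('a \<Rightarrow> 'a \<Rightarrow> 'a)
   \<Rightarrow> ('a \<Rightarrow> 'a \<Rightarrow> 'a \<Rightarrow> 'a \<Rightarrow> 'a) \<Rightarrow> ('a \<Rightarrow> 'a \<Rightarrow> 'a \<Rightarrow> 'a \<Rightarrow> 'a) \<Rightarrow> bool" where
  "construction_data S0 mS I mI L mL \<alpha> \<beta> \<longleftrightarrow>
    (let E0 = idems S0 mS; pl = aplus S0 mS; st = astar S0 mS;
         LL = Lcl I mI; RR = Rcl L mL in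
     adequate S0 mS \<and>
     left_regular_band I mI \<and> right_regular_band L mL \<and>
     I = (\<Union>x\<in>E0. LL x) \<and> L = (\<Union>x\<in>E0. RR x) \<and>
     E0 \<subseteq> I \<inter> L \<and>
     semilattice_transversal I mI E0 \<and> semilattice_transversal L mL E0 \<and>
     (\<forall>x\<in>E0. \<forall>y\<in>E0. mI x y = mS x y \<and> mL x y = mS x y) \<and>
     \<comment> \<open>the mappings\<close>
     (\<forall>x\<in>S0. \<forall>y\<in>S0. \<forall>f\<in>RR (st x). \<forall>g\<in>LL (pl y).
        \<alpha> x y f g \<in> LL (pl (mS x y)) \<and> \<beta> x y f g \<in> RR (st (mS x y))) \<and>
     \<comment> \<open>condition 1\<close>
     (\<forall>x\<in>S0. \<forall>y\<in>S0. \<forall>z\<in>S0. \<forall>f\<in>RR (st x). \<forall>g\<in>LL (pl y). \<forall>h\<in>RR (st y). \<forall>k\<in>LL (pl z).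
        mI (\<alpha> x y f g) (\<alpha> (mS x y) z (mL (\<beta> x y f g) h) k)
          = \<alpha> x (mS y z) f (mI g (\<alpha> y z h k)) \<and>
        mL (\<beta> x (mS y z) f (mI g (\<alpha> y z h k))) (\<beta> y z h k)
          = \<beta> (mS x y) z (mL (\<beta> x y f g) h) k) \<and>
     \<comment> \<open>condition 2\<close>
     (\<forall>x\<in>S0. \<forall>y\<in>S0. \<alpha> x y (st x) (pl y) = pl (mS x y) \<and> \<beta> x y (st x) (pl y) = st (mS x y)) \<and>
     \<comment> \<open>condition 3\<close>
     (\<forall>x\<in>S0. \<forall>x1\<in>S0. \<forall>x2\<in>S0. \<forall>e1\<in>LL (pl x1). \<forall>f1\<in>RR (st x1).
        \<forall>e2\<in>LL (pl x2). \<forall>f2\<in>RR (st x2). \<forall>e\<in>LL (pl x).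
        mI e1 (\<alpha> x1 x f1 e) = mI e2 (\<alpha> x2 x f2 e) \<and> mS x1 x = mS x2 x \<and>
        mL (\<beta> x1 x f1 e) (st x) = mL (\<beta> x2 x f2 e) (st x) \<longrightarrow>
        mI e1 (\<alpha> x1 (pl x) f1 e) = mI e2 (\<alpha> x2 (pl x) f2 e) \<and> mS x1 (pl x) = mS x2 (pl x) \<and>
        \<beta> x1 (pl x) f1 e = \<beta> x2 (pl x) f2 e) \<and>
     \<comment> \<open>condition 4\<close>
     (\<forall>x\<in>S0. \<forall>x1\<in>S0. \<forall>x2\<in>S0. \<forall>e1\<in>LL (pl x1). \<forall>f1\<in>RR (st x1).
        \<forall>e2\<in>LL (pl x2). \<forall>f2\<in>RR (st x2). \<forall>f\<in>RR (st x).
        mI (pl x) (\<alpha> x x1 f e1) = mI (pl x) (\<alpha> x x2 f e2) \<and> mS x x1 = mS x x2 \<and>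
        mL (\<beta> x x1 f e1) f1 = mL (\<beta> x x2 f e2) f2 \<longrightarrow>
        \<alpha> (st x) x1 f e1 = \<alpha> (st x) x2 f e2 \<and> mS (st x) x1 = mS (st x) x2 \<and>
        mL (\<beta> (st x) x1 f e1) f1 = mL (\<beta> (st x) x2 f e2) f2))"

definition condition5 ::
  "'a set \<Rightarrow> ('a \<Rightarrow> 'a \<Rightarrow> 'a) \<Rightarrow> 'a set \<Rightarrow> ('a \<Rightarrow> 'a \<Rightarrow> 'a) \<Rightarrow> 'a set \<Rightarrow> ('a \<Rightarrow> 'a \<Rightarrow> 'a)
   \<Rightarrow> ('a \<Rightarrow> 'a \<Rightarrow> 'a \<Rightarrow> 'a \<Rightarrow> 'a) \<Rightarrow> ('a \<Rightarrow> 'a \<Rightarrow> 'a \<Rightarrow> 'a \<Rightarrow> 'a) \<Rightarrow> bool" where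
  "condition5 S0 mS I mI L mL \<alpha> \<beta> \<longleftrightarrow>
    (let E0 = idems S0 mS in
     \<forall>f\<in>L. \<forall>e\<in>I. \<alpha> (inv0 mL E0 f) (inv0 mI E0 e) (inv0 mL E0 f) e = mI (inv0 mL E0 f) e \<and>
                   \<beta> (inv0 mL E0 f) (inv0 mI E0 e) f (inv0 mI E0 e) = mL f (inv0 mI E0 e))"

definition Wset :: "'a set \<Rightarrow> ('a \<Rightarrow> 'a \<Rightarrow> 'a) \<Rightarrow> 'a set \<Rightarrow> ('a \<Rightarrow> 'a \<Rightarrow> 'a) \<Rightarrow> 'a set \<Rightarrow> ('a \<Rightarrow> 'a \<Rightarrow> 'a)
   \<Rightarrow> ('a \<times> 'a \<times> 'a) set" where
  "Wset S0 mS I mI L mL = {(e, x, f). e \<in> I \<and> x \<in> S0 \<and> f \<in> L \<and>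
      e \<in> Lcl I mI (aplus S0 mS x) \<and> f \<in> Rcl L mL (astar S0 mS x)}"

definition Wmult :: "('a \<Rightarrow> 'a \<Rightarrow> 'a) \<Rightarrow> ('a \<Rightarrow> 'a \<Rightarrow> 'a) \<Rightarrow> ('a \<Rightarrow> 'a \<Rightarrow> 'a)
   \<Rightarrow> ('a \<Rightarrow> 'a \<Rightarrow> 'a \<Rightarrow> 'a \<Rightarrow> 'a) \<Rightarrow> ('a \<Rightarrow> 'a \<Rightarrow> 'a \<Rightarrow> 'a \<Rightarrow> 'a)
   \<Rightarrow> 'a \<times> 'a \<times> 'a \<Rightarrow> 'a \<times> 'a \<times> 'a \<Rightarrow> 'a \<times> 'a \<times> 'a" where
  "Wmult mS mI mL \<alpha> \<beta> = (\<lambda>(e, x, f) (g, y, h).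
      (mI e (\<alpha> x y f g), mS x y, mL (\<beta> x y f g) h))"

end

theory Submission
  imports Defs
begin

text \<open>
  For the construction, condition 1 makes \<open>W\<close> a semigroup whose idempotents are the triples
  \<open>(e, x, f)\<close> with \<open>x \<in> E\<^sup>0\<close>. The triple \<open>(e, x, f)\<close> is \<open>\<R>\<^sup>*\<close>-related to \<open>(e, x\<^sup>+, x\<^sup>+)\<close>
  and \<open>\<L>\<^sup>*\<close>-related to \<open>(x\<^sup>*, x\<^sup>*, f)\<close>: the required cancellation properties are exactly
  conditions 3 and 4. The triples \<open>(x\<^sup>+, x, x\<^sup>*)\<close> form a copy of \<open>S\<^sup>0\<close> which is an admissible
  adequate transversal, \<open>(e, x, f) = (e, x\<^sup>+, x\<^sup>+)(x\<^sup>+, x, x\<^sup>*)(x\<^sup>*, x\<^sup>*, f)\<close> being the required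
  decomposition, and under condition 5 the first resp. last coordinate identifies \<open>I(W)\<close> with \<open>I\<close>
  and \<open>\<Lambda>(W)\<close> with \<open>\<Lambda>\<close>.

  Conversely, for \<open>S\<close> with admissible transversal \<open>S\<^sup>0\<close> take \<open>I = I(S)\<close>, \<open>\<Lambda> = \<Lambda>(S)\<close> and let
  \<open>(f, g)\<alpha>\<^bsub>x,y\<^esub>\<close> and \<open>(f, g)\<beta>\<^bsub>x,y\<^esub>\<close> be the idempotents \<open>e\<close> and \<open>f\<close> of the decomposition of
  \<open>x f g y\<close>. Admissibility makes \<open>I(S)\<close> and \<open>\<Lambda>(S)\<close> regular bands with common transversal \<open>E\<^sup>0\<close>,
  uniqueness of decompositions yields conditions 1--4, and \<open>(e, x, f) \<mapsto> e x f\<close> is an isomorphism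
  from \<open>W\<close> onto \<open>S\<close>.
\<close>

lemma sgrp_closed: "sgrp S m \<Longrightarrow> x \<in> S \<Longrightarrow> y \<in> S \<Longrightarrow> m x y \<in> S"
  by (simp add: sgrp_def)

lemma sgrp_assoc: "sgrp S m \<Longrightarrow> x \<in> S \<Longrightarrow> y \<in> S \<Longrightarrow> z \<in> S \<Longrightarrow> m (m x y) z = m x (m y z)"
  by (simp add: sgrp_def)

lemma idems_iff: "e \<in> idems S m \<longleftrightarrow> e \<in> S \<and> m e e = e"
  by (simp add: idems_def)

lemma S1_iff: "u \<in> S1 S \<longleftrightarrow> u = None \<or> (\<exists>x\<in>S. u = Some x)"
  by (auto simp: S1_def)

lemma Some_in_S1: "x \<in> S \<Longrightarrow> Some x \<in> S1 S"
  and None_in_S1: "None \<in> S1 S"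
  by (auto simp: S1_def)

lemma lmul1_simps [simp]: "lmul1 m None a = a" "lmul1 m (Some x) a = m x a"
  by (simp_all add: lmul1_def)

lemma rmul1_simps [simp]: "rmul1 m a None = a" "rmul1 m a (Some x) = m a x"
  by (simp_all add: rmul1_def)

lemma lmul1_closed: "sgrp S m \<Longrightarrow> u \<in> S1 S \<Longrightarrow> a \<in> S \<Longrightarrow> lmul1 m u a \<in> S"
  by (auto simp: S1_iff sgrp_closed)

lemma rmul1_closed: "sgrp S m \<Longrightarrow> u \<in> S1 S \<Longrightarrow> a \<in> S \<Longrightarrow> rmul1 m a u \<in> S"
  by (auto simp: S1_iff sgrp_closed)

lemma lmul1_assoc:
  "sgrp S m \<Longrightarrow> u \<in> S1 S \<Longrightarrow> a \<in> S \<Longrightarrow> b \<in> S \<Longrightarrow> lmul1 m u (m a b) = m (lmul1 m u a) b"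
  by (auto simp: S1_iff sgrp_assoc)

subsection \<open>The relations \<open>\<R>\<^sup>*\<close> and \<open>\<L>\<^sup>*\<close>\<close>

lemma Rstar_refl: "a \<in> S \<Longrightarrow> Rstar S m a a"
  unfolding Rstar_def by blast

lemma Rstar_sym: "Rstar S m a b \<Longrightarrow> Rstar S m b a"
  unfolding Rstar_def by blast

lemma Rstar_trans: "Rstar S m a b \<Longrightarrow> Rstar S m b c \<Longrightarrow> Rstar S m a c"
  unfolding Rstar_def by blast

lemma Lstar_refl: "a \<in> S \<Longrightarrow> Lstar S m a a"
  unfolding Lstar_def by blast

lemma Lstar_sym: "Lstar S m a b \<Longrightarrow> Lstar S m b a"
  unfolding Lstar_def by blast

lemma Lstar_trans: "Lstar S m a b \<Longrightarrow> Lstar S m b c \<Longrightarrow> Lstar S m a c"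
  unfolding Lstar_def by blast

lemma Rstar_cancel:
  "Rstar S m a b \<Longrightarrow> u \<in> S \<Longrightarrow> v \<in> S \<Longrightarrow> m u a = m v a \<Longrightarrow> m u b = m v b"
  unfolding Rstar_def using Some_in_S1 by (metis lmul1_simps(2))

lemma Lstar_cancel:
  "Lstar S m a b \<Longrightarrow> u \<in> S \<Longrightarrow> v \<in> S \<Longrightarrow> m a u = m a v \<Longrightarrow> m b u = m b v"
  unfolding Lstar_def using Some_in_S1 by (metis rmul1_simps(2))

lemma Rstar_left_identity: "Rstar S m a b \<Longrightarrow> u \<in> S \<Longrightarrow> m u a = a \<Longrightarrow> m u b = b"
  unfolding Rstar_def using Some_in_S1 None_in_S1 by (metis lmul1_simps)

lemma Lstar_right_identity: "Lstar S m a b \<Longrightarrow> u \<in> S \<Longrightarrow> m a u = a \<Longrightarrow> m b u = b"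
  unfolding Lstar_def using Some_in_S1 None_in_S1 by (metis rmul1_simps)

lemma Rstar_idem_left_identity: "Rstar S m a e \<Longrightarrow> e \<in> idems S m \<Longrightarrow> m e a = a"
  using Rstar_left_identity[OF Rstar_sym] by (metis idems_iff)

lemma Lstar_idem_right_identity: "Lstar S m a e \<Longrightarrow> e \<in> idems S m \<Longrightarrow> m a e = a"
  using Lstar_right_identity[OF Lstar_sym] by (metis idems_iff)

lemma Rstar_idems:
  "Rstar S m e f \<Longrightarrow> e \<in> idems S m \<Longrightarrow> f \<in> idems S m \<Longrightarrow> m f e = e \<and> m e f = f"
  using Rstar_idem_left_identity Rstar_sym by metis

lemma Lstar_idems:
  "Lstar S m e f \<Longrightarrow> e \<in> idems S m \<Longrightarrow> f \<in> idems S m \<Longrightarrow> m e f = e \<and> m f e = f"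
  using Lstar_idem_right_identity Lstar_sym by metis

lemma Rstar_idemI:
  assumes sg: "sgrp S m" and a: "a \<in> S" and e: "e \<in> idems S m" and ea: "m e a = a"
    and cancel: "\<And>u v. u \<in> S \<Longrightarrow> v \<in> S \<Longrightarrow> m u a = m v a \<Longrightarrow> m u e = m v e"
  shows "Rstar S m a e"
proof -
  have eS: "e \<in> S" and ee: "m e e = e" using e by (simp_all add: idems_iff)
  have cancel1: "lmul1 m u e = lmul1 m v e"
    if u: "u \<in> S1 S" and v: "v \<in> S1 S" and uv: "lmul1 m u a = lmul1 m v a" for u v
  proof -
    define u' where "u' = (case u of None \<Rightarrow> e | Some w \<Rightarrow> w)"
    define v' where "v' = (case v of None \<Rightarrow> e | Some w \<Rightarrow> w)"
    have "u' \<in> S" "v' \<in> S" "lmul1 m u a = m u' a" "lmul1 m v a = m v' a"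
      "lmul1 m u e = m u' e" "lmul1 m v e = m v' e"
      using u v eS ee ea by (auto simp: S1_iff u'_def v'_def)
    then show ?thesis using cancel uv by metis
  qed
  have "lmul1 m u a = m (lmul1 m u e) a" if "u \<in> S1 S" for u
    using that ea sg a eS by (auto simp: S1_iff sgrp_assoc)
  then show ?thesis
    unfolding Rstar_def using a eS cancel1 by metis
qed

lemma Lstar_idemI:
  assumes sg: "sgrp S m" and a: "a \<in> S" and e: "e \<in> idems S m" and ae: "m a e = a"
    and cancel: "\<And>u v. u \<in> S \<Longrightarrow> v \<in> S \<Longrightarrow> m a u = m a v \<Longrightarrow> m e u = m e v"
  shows "Lstar S m a e"
proof -
  have eS: "e \<in> S" and ee: "m e e = e" using e by (simp_all add: idems_iff)
  have cancel1: "rmul1 m e u = rmul1 m e v"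
    if u: "u \<in> S1 S" and v: "v \<in> S1 S" and uv: "rmul1 m a u = rmul1 m a v" for u v
  proof -
    define u' where "u' = (case u of None \<Rightarrow> e | Some w \<Rightarrow> w)"
    define v' where "v' = (case v of None \<Rightarrow> e | Some w \<Rightarrow> w)"
    have "u' \<in> S" "v' \<in> S" "rmul1 m a u = m a u'" "rmul1 m a v = m a v'"
      "rmul1 m e u = m e u'" "rmul1 m e v = m e v'"
      using u v eS ee ae by (auto simp: S1_iff u'_def v'_def)
    then show ?thesis using cancel uv by metis
  qed
  have "rmul1 m a u = m a (rmul1 m e u)" if "u \<in> S1 S" for u
    using that ae sg a eS by (auto simp: S1_iff sgrp_assoc[symmetric])
  then show ?thesis
    unfolding Lstar_def using a eS cancel1 by metis
qed

lemma GL_idems_iff: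
  assumes "sgrp S m" "a \<in> idems S m" "b \<in> idems S m"
  shows "GL S m a b \<longleftrightarrow> m a b = a \<and> m b a = b"
proof
  assume "GL S m a b"
  then obtain u v where u: "u \<in> S1 S" "a = lmul1 m u b" and v: "v \<in> S1 S" "b = lmul1 m v a"
    by (auto simp: GL_def)
  have "m a b = a"
    using u assms by (cases u) (auto simp: S1_iff idems_iff sgrp_assoc)
  moreover have "m b a = b"
    using v assms by (cases v) (auto simp: S1_iff idems_iff sgrp_assoc)
  ultimately show "m a b = a \<and> m b a = b" by simp
next
  assume "m a b = a \<and> m b a = b"
  then show "GL S m a b" using assms unfolding GL_def idems_iff
    by (metis Some_in_S1 lmul1_simps(2))
qed

lemma GR_idems_iff:
  assumes "sgrp S m" "a \<in> idems S m" "b \<in> idems S m"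
  shows "GR S m a b \<longleftrightarrow> m b a = a \<and> m a b = b"
proof
  assume "GR S m a b"
  then obtain u v where u: "u \<in> S1 S" "a = rmul1 m b u" and v: "v \<in> S1 S" "b = rmul1 m a v"
    by (auto simp: GR_def)
  have "m b a = a"
    using u assms by (cases u) (auto simp: S1_iff idems_iff, metis sgrp_assoc)
  moreover have "m a b = b"
    using v assms by (cases v) (auto simp: S1_iff idems_iff, metis sgrp_assoc)
  ultimately show "m b a = a \<and> m a b = b" by simp
next
  assume "m b a = a \<and> m a b = b"
  then show "GR S m a b" using assms unfolding GR_def idems_iff
    by (metis Some_in_S1 rmul1_simps(2))
qed

lemma adequate_imp_sgrp: "adequate S m \<Longrightarrow> sgrp S m"
  by (simp add: adequate_def abundant_def)

lemma aplus_eq: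
  assumes ad: "adequate S m" and e: "e \<in> idems S m" "Rstar S m a e"
  shows "aplus S m a = e"
  unfolding aplus_def
proof (rule the_equality)
  fix f assume f: "f \<in> idems S m \<and> Rstar S m a f"
  then have "Rstar S m e f" using e Rstar_trans Rstar_sym by metis
  then have "m f e = e" "m e f = f" using Rstar_idems e f by metis+
  moreover have "m e f = m f e" using ad e f by (simp add: adequate_def)
  ultimately show "f = e" by simp
qed (use e in simp)

lemma astar_eq:
  assumes ad: "adequate S m" and e: "e \<in> idems S m" "Lstar S m a e"
  shows "astar S m a = e"
  unfolding astar_def
proof (rule the_equality)
  fix f assume f: "f \<in> idems S m \<and> Lstar S m a f"
  then have "Lstar S m e f" using e Lstar_trans Lstar_sym by metis
  then have "m e f = e" "m f e = f" using Lstar_idems e f by metis+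
  moreover have "m e f = m f e" using ad e f by (simp add: adequate_def)
  ultimately show "f = e" by simp
qed (use e in simp)

lemma aplus_idem_Rstar:
  assumes "adequate S m" "a \<in> S"
  shows "aplus S m a \<in> idems S m \<and> Rstar S m a (aplus S m a)"
proof -
  obtain e where "e \<in> idems S m" "Rstar S m a e"
    using assms unfolding adequate_def abundant_def by blast
  then show ?thesis using aplus_eq[OF assms(1)] by simp
qed

lemma astar_idem_Lstar:
  assumes "adequate S m" "a \<in> S"
  shows "astar S m a \<in> idems S m \<and> Lstar S m a (astar S m a)"
proof -
  obtain e where "e \<in> idems S m" "Lstar S m a e"
    using assms unfolding adequate_def abundant_def by blast
  then show ?thesis using astar_eq[OF assms(1)] by simp
qed

locale adequate_sgrp =
  fixes S :: "'a set" and m :: "'a \<Rightarrow> 'a \<Rightarrow> 'a"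
  assumes adequate: "adequate S m"
begin

abbreviation "pl \<equiv> aplus S m"
abbreviation "st \<equiv> astar S m"
abbreviation "E \<equiv> idems S m"

lemma sgrp: "sgrp S m"
  using adequate adequate_imp_sgrp by blast

lemma closed [simp]: "x \<in> S \<Longrightarrow> y \<in> S \<Longrightarrow> m x y \<in> S"
  by (rule sgrp_closed[OF sgrp])

lemma assoc: "x \<in> S \<Longrightarrow> y \<in> S \<Longrightarrow> z \<in> S \<Longrightarrow> m (m x y) z = m x (m y z)"
  by (rule sgrp_assoc[OF sgrp])

lemma idems_commute: "e \<in> E \<Longrightarrow> f \<in> E \<Longrightarrow> m e f = m f e"
  using adequate by (simp add: adequate_def)

lemma idems_in [simp]: "e \<in> E \<Longrightarrow> e \<in> S"
  by (simp add: idems_iff)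

lemma idem: "e \<in> E \<Longrightarrow> m e e = e"
  by (simp add: idems_iff)

lemma idems_closed [simp]:
  assumes "e \<in> E" "f \<in> E"
  shows "m e f \<in> E"
proof -
  have "m (m e f) (m e f) = m e (m (m f e) f)"
    using assms by (simp add: assoc)
  also have "\<dots> = m e f"
    using assms by (simp add: idems_commute assoc idem flip: assoc[of e e f])
  finally show ?thesis using assms by (simp add: idems_iff)
qed

lemma idems_absorb:
  assumes "e \<in> E" "f \<in> E"
  shows "m (m e f) e = m e f" "m e (m e f) = m e f" "m (m f e) e = m f e" "m e (m f e) = m f e"
proof -
  have fe: "m f e = m e f" using assms idems_commute by metis
  have "m e (m e f) = m e f" using assms by (simp add: idem flip: assoc)
  moreover have "m (m e f) e = m e f" using assms fe calculation by (simp add: assoc)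
  ultimately show "m (m e f) e = m e f" "m e (m e f) = m e f" "m (m f e) e = m f e" "m e (m f e) = m f e"
    using fe by simp_all
qed

lemma plus_idem [simp]: "a \<in> S \<Longrightarrow> pl a \<in> E"
  using aplus_idem_Rstar[OF adequate] by blast

lemma star_idem [simp]: "a \<in> S \<Longrightarrow> st a \<in> E"
  using astar_idem_Lstar[OF adequate] by blast

lemma plus_Rstar: "a \<in> S \<Longrightarrow> Rstar S m a (pl a)"
  using aplus_idem_Rstar[OF adequate] by blast

lemma star_Lstar: "a \<in> S \<Longrightarrow> Lstar S m a (st a)"
  using astar_idem_Lstar[OF adequate] by blast

lemma plus_left: "a \<in> S \<Longrightarrow> m (pl a) a = a"
  using Rstar_idem_left_identity[OF plus_Rstar plus_idem] .

lemma star_right: "a \<in> S \<Longrightarrow> m a (st a) = a"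
  using Lstar_idem_right_identity[OF star_Lstar star_idem] .

lemma plus_of_idem [simp]: "e \<in> E \<Longrightarrow> pl e = e"
  using aplus_eq[OF adequate _ Rstar_refl[OF idems_in]] .

lemma star_of_idem [simp]: "e \<in> E \<Longrightarrow> st e = e"
  using astar_eq[OF adequate _ Lstar_refl[OF idems_in]] .

lemma plus_mult:
  assumes "a \<in> S" "b \<in> S"
  shows "m (pl a) (pl (m a b)) = pl (m a b)" "m (pl (m a b)) (pl a) = pl (m a b)"
proof -
  have "m (pl a) (m a b) = m a b"
    using assms plus_left by (simp flip: assoc)
  then show "m (pl a) (pl (m a b)) = pl (m a b)"
    using Rstar_left_identity[OF plus_Rstar] assms by simp
  then show "m (pl (m a b)) (pl a) = pl (m a b)"
    using assms idems_commute by simp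
qed

lemma star_mult:
  assumes "a \<in> S" "b \<in> S"
  shows "m (st (m a b)) (st b) = st (m a b)" "m (st b) (st (m a b)) = st (m a b)"
proof -
  have "m (m a b) (st b) = m a b"
    using assms star_right by (simp add: assoc)
  then show "m (st (m a b)) (st b) = st (m a b)"
    using Lstar_right_identity[OF star_Lstar] assms by simp
  then show "m (st b) (st (m a b)) = st (m a b)"
    using assms idems_commute by simp
qed

lemma Rstar_iff_plus_eq: "a \<in> S \<Longrightarrow> b \<in> S \<Longrightarrow> Rstar S m a b \<longleftrightarrow> pl a = pl b"
  by (metis Rstar_sym Rstar_trans aplus_eq adequate plus_Rstar plus_idem)

lemma Lstar_iff_star_eq: "a \<in> S \<Longrightarrow> b \<in> S \<Longrightarrow> Lstar S m a b \<longleftrightarrow> st a = st b"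
  by (metis Lstar_sym Lstar_trans astar_eq adequate star_Lstar star_idem)

end

locale sgrp_isomorphism =
  fixes A :: "'a set" and ma :: "'a \<Rightarrow> 'a \<Rightarrow> 'a" and B :: "'b set" and mb :: "'b \<Rightarrow> 'b \<Rightarrow> 'b"
    and h :: "'a \<Rightarrow> 'b"
  assumes bij: "bij_betw h A B"
    and hom: "\<And>x y. x \<in> A \<Longrightarrow> y \<in> A \<Longrightarrow> h (ma x y) = mb (h x) (h y)"
    and sgrp_A: "sgrp A ma"
begin

lemma inj_iff: "x \<in> A \<Longrightarrow> y \<in> A \<Longrightarrow> h x = h y \<longleftrightarrow> x = y"
  using bij by (auto simp: bij_betw_def inj_on_def)

lemma image_eq: "B = h ` A"
  using bij by (simp add: bij_betw_def)

lemma sgrp_B: "sgrp B mb"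
  unfolding sgrp_def image_eq
  by (auto simp: hom[symmetric] sgrp_closed[OF sgrp_A] sgrp_assoc[OF sgrp_A])

lemma ball_S1_B: "(\<forall>u\<in>S1 B. P u) \<longleftrightarrow> (\<forall>u\<in>S1 A. P (map_option h u))"
  by (auto simp: S1_def image_eq)

lemma lmul1_hom: "u \<in> S1 A \<Longrightarrow> a \<in> A \<Longrightarrow> lmul1 mb (map_option h u) (h a) = h (lmul1 ma u a)"
  by (auto simp: S1_iff hom)

lemma rmul1_hom: "u \<in> S1 A \<Longrightarrow> a \<in> A \<Longrightarrow> rmul1 mb (h a) (map_option h u) = h (rmul1 ma a u)"
  by (auto simp: S1_iff hom)

lemma Rstar_iff: "a \<in> A \<Longrightarrow> b \<in> A \<Longrightarrow> Rstar B mb (h a) (h b) \<longleftrightarrow> Rstar A ma a b"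
  unfolding Rstar_def ball_S1_B
  by (simp add: image_eq lmul1_hom inj_iff lmul1_closed[OF sgrp_A])

lemma Lstar_iff: "a \<in> A \<Longrightarrow> b \<in> A \<Longrightarrow> Lstar B mb (h a) (h b) \<longleftrightarrow> Lstar A ma a b"
  unfolding Lstar_def ball_S1_B
  by (simp add: image_eq rmul1_hom inj_iff rmul1_closed[OF sgrp_A])

lemma idems_image_iff: "a \<in> A \<Longrightarrow> h a \<in> idems B mb \<longleftrightarrow> a \<in> idems A ma"
  by (auto simp: idems_iff image_eq hom[symmetric] inj_iff sgrp_closed[OF sgrp_A])

lemma adequate_B:
  assumes "adequate A ma"
  shows "adequate B mb"
  unfolding adequate_def abundant_def
proof (intro conjI ballI sgrp_B)
  fix b assume "b \<in> B"
  then obtain a where a: "a \<in> A" "b = h a" using image_eq by blast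
  show "\<exists>e\<in>idems B mb. Rstar B mb b e"
    using aplus_idem_Rstar[OF assms a(1)] a idems_image_iff Rstar_iff by (metis idems_iff)
  show "\<exists>e\<in>idems B mb. Lstar B mb b e"
    using astar_idem_Lstar[OF assms a(1)] a idems_image_iff Lstar_iff by (metis idems_iff)
next
  fix e f assume "e \<in> idems B mb" "f \<in> idems B mb"
  then obtain a c where "a \<in> idems A ma" "c \<in> idems A ma" "e = h a" "f = h c"
    using idems_image_iff image_eq by (auto simp: idems_iff)
  moreover have "ma a c = ma c a"
    using assms calculation by (simp add: adequate_def)
  ultimately show "mb e f = mb f e"
    using hom by (metis idems_iff)
qed

end

subsection \<open>Adequate transversals\<close>

locale transversal =
  fixes S :: "'a set" and m :: "'a \<Rightarrow> 'a \<Rightarrow> 'a" and T :: "'a set"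
  assumes adequate_transversal: "adequate_transversal S m T"
begin

lemma sgrp: "sgrp S m"
  using adequate_transversal by (simp add: adequate_transversal_def abundant_def)

lemma star_subsgrp: "star_subsgrp T S m"
  using adequate_transversal by (simp add: adequate_transversal_def)

lemma ex1_decomp: "x \<in> S \<Longrightarrow> \<exists>!xb. \<exists>e f. decomp S m T x e xb f"
  using adequate_transversal by (simp add: adequate_transversal_def)

sublocale T: adequate_sgrp T m
  using adequate_transversal by unfold_locales (simp add: adequate_transversal_def)

abbreviation "ES \<equiv> idems S m"
abbreviation "E0 \<equiv> idems T m"

lemma closed [simp]: "x \<in> S \<Longrightarrow> y \<in> S \<Longrightarrow> m x y \<in> S"
  by (rule sgrp_closed[OF sgrp])

lemma assoc: "x \<in> S \<Longrightarrow> y \<in> S \<Longrightarrow> z \<in> S \<Longrightarrow> m (m x y) z = m x (m y z)"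
  by (rule sgrp_assoc[OF sgrp])

lemma transversal_in [simp]: "x \<in> T \<Longrightarrow> x \<in> S"
  using star_subsgrp by (auto simp: star_subsgrp_def)

lemma idems_in [simp]: "e \<in> ES \<Longrightarrow> e \<in> S"
  by (simp add: idems_iff)

lemma transversal_idems [simp]: "e \<in> E0 \<Longrightarrow> e \<in> ES"
  by (simp add: idems_iff)

lemma idem: "e \<in> ES \<Longrightarrow> m e e = e"
  by (simp add: idems_iff)

lemma Rstar_transversal_iff: "a \<in> T \<Longrightarrow> b \<in> T \<Longrightarrow> Rstar S m a b \<longleftrightarrow> Rstar T m a b"
  using star_subsgrp by (simp add: star_subsgrp_def)

lemma Lstar_transversal_iff: "a \<in> T \<Longrightarrow> b \<in> T \<Longrightarrow> Lstar S m a b \<longleftrightarrow> Lstar T m a b"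
  using star_subsgrp by (simp add: star_subsgrp_def)

lemma decomp_iff:
  "decomp S m T x e xb f \<longleftrightarrow> xb \<in> T \<and> e \<in> ES \<and> f \<in> ES \<and> x = m (m e xb) f \<and>
     m e (T.pl xb) = e \<and> m (T.pl xb) e = T.pl xb \<and> m (T.st xb) f = f \<and> m f (T.st xb) = T.st xb"
  unfolding decomp_def
  using GL_idems_iff[OF sgrp, of e "T.pl xb"] GR_idems_iff[OF sgrp, of f "T.st xb"] by auto

lemma decomp_Rstar:
  assumes "decomp S m T x e xb f"
  shows "Rstar S m x e"
proof -
  let ?p = "T.pl xb" and ?s = "T.st xb"
  have xb: "xb \<in> T" and e: "e \<in> ES" and f: "f \<in> ES" and x: "x = m (m e xb) f"
    and ep: "m e ?p = e" and fs: "m f ?s = ?s" using assms by (simp_all add: decomp_iff)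
  have xS: "x \<in> S" using x xb e f by simp
  have x_mult: "lmul1 m u x = m (m (lmul1 m u e) xb) f" if "u \<in> S1 S" for u
    using that x xb e f by (simp add: lmul1_assoc[OF sgrp])
  have p_Rstar: "Rstar S m xb ?p" using T.plus_Rstar[OF xb] Rstar_transversal_iff xb by simp
  have "lmul1 m u e = lmul1 m v e"
    if u: "u \<in> S1 S" and v: "v \<in> S1 S" and uv: "lmul1 m u x = lmul1 m v x" for u v
  proof -
    have uS: "lmul1 m u e \<in> S" and vS: "lmul1 m v e \<in> S" using lmul1_closed[OF sgrp] u v e by auto
    \<comment> \<open>multiply on the right by \<open>xb\<^sup>*\<close> to strip off \<open>f\<close>, then cancel \<open>xb\<close> against \<open>xb\<^sup>+\<close>\<close>
    have "m (m (m (lmul1 m u e) xb) f) ?s = m (m (m (lmul1 m v e) xb) f) ?s"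
      using uv x_mult u v by simp
    then have "m (lmul1 m u e) xb = m (lmul1 m v e) xb"
      using uS vS xb f fs T.star_right by (simp add: assoc)
    then have "m (lmul1 m u e) ?p = m (lmul1 m v e) ?p"
      using Rstar_cancel[OF p_Rstar uS vS] by simp
    moreover have "m (lmul1 m w e) ?p = lmul1 m w e" if "w \<in> S1 S" for w
      using that e ep xb by (auto simp: S1_iff assoc)
    ultimately show ?thesis using u v by simp
  qed
  moreover have "lmul1 m u x = lmul1 m v x" if "u \<in> S1 S" "v \<in> S1 S" "lmul1 m u e = lmul1 m v e" for u v
    using that x_mult by simp
  ultimately show ?thesis unfolding Rstar_def using xS idems_in[OF e] by blast
qed

lemma decomp_Lstar:
  assumes "decomp S m T x e xb f"
  shows "Lstar S m x f"
proof -
  let ?p = "T.pl xb" and ?s = "T.st xb"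
  have xb: "xb \<in> T" and e: "e \<in> ES" and f: "f \<in> ES" and x: "x = m (m e xb) f"
    and ep: "m ?p e = ?p" and fs: "m ?s f = f" using assms by (simp_all add: decomp_iff)
  have xS: "x \<in> S" using x xb e f by simp
  have x_mult: "rmul1 m x u = m e (m xb (rmul1 m f u))" if "u \<in> S1 S" for u
    using that x xb e f by (auto simp: S1_iff assoc)
  have s_Lstar: "Lstar S m xb ?s" using T.star_Lstar[OF xb] Lstar_transversal_iff xb by simp
  have "rmul1 m f u = rmul1 m f v"
    if u: "u \<in> S1 S" and v: "v \<in> S1 S" and uv: "rmul1 m x u = rmul1 m x v" for u v
  proof -
    have uS: "rmul1 m f u \<in> S" and vS: "rmul1 m f v \<in> S" using rmul1_closed[OF sgrp] u v f by auto
    have "m ?p (m e (m xb (rmul1 m f u))) = m ?p (m e (m xb (rmul1 m f v)))"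
      using uv x_mult u v by simp
    moreover have "m ?p (m xb w) = m xb w" if "w \<in> S" for w
      using that xb T.plus_left by (simp flip: assoc)
    ultimately have "m xb (rmul1 m f u) = m xb (rmul1 m f v)"
      using uS vS xb e ep by (simp flip: assoc)
    then have "m ?s (rmul1 m f u) = m ?s (rmul1 m f v)"
      using Lstar_cancel[OF s_Lstar uS vS] by simp
    moreover have "m ?s (rmul1 m f w) = rmul1 m f w" if "w \<in> S1 S" for w
      using that f fs xb by (auto simp: S1_iff simp flip: assoc)
    ultimately show ?thesis using u v by simp
  qed
  moreover have "rmul1 m x u = rmul1 m x v" if "u \<in> S1 S" "v \<in> S1 S" "rmul1 m f u = rmul1 m f v" for u v
    using that x_mult by simp
  ultimately show ?thesis unfolding Lstar_def using xS idems_in[OF f] by blast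
qed

lemma decomp_unique_idems:
  assumes d: "decomp S m T x e xb f" and d': "decomp S m T x e' xb f'"
  shows "e = e'" "f = f'"
proof -
  let ?p = "T.pl xb" and ?s = "T.st xb"
  have idems: "e \<in> ES" "e' \<in> ES" "f \<in> ES" "f' \<in> ES" "xb \<in> T"
    and h: "m e ?p = e" "m ?p e = ?p" "m e' ?p = e'" "m ?s f = f" "m f ?s = ?s" "m ?s f' = f'"
    using d d' by (simp_all add: decomp_iff)
  have "Rstar S m e e'" using Rstar_trans[OF Rstar_sym[OF decomp_Rstar[OF d]] decomp_Rstar[OF d']] .
  from Rstar_idems[OF this idems(1,2)] have "m e' e = e" by simp
  then have "e = m (m e' ?p) e" using h by simp
  also have "\<dots> = m e' (m ?p e)" using idems by (simp add: assoc)
  also have "\<dots> = e'" using h by simp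
  finally show "e = e'" .
  have "Lstar S m f f'" using Lstar_trans[OF Lstar_sym[OF decomp_Lstar[OF d]] decomp_Lstar[OF d']] .
  from Lstar_idems[OF this idems(3,4)] have "m f f' = f" by simp
  then have "f = m f (m ?s f')" using h by simp
  also have "\<dots> = m (m f ?s) f'" using idems by (simp add: assoc)
  also have "\<dots> = f'" using h by simp
  finally show "f = f'" .
qed

lemma decomp_components:
  assumes d: "decomp S m T x e xb f"
  shows "tbar S m T x = xb" "te S m T x = e" "tf S m T x = f"
proof -
  have xS: "x \<in> S" using d by (simp add: decomp_iff)
  show tb: "tbar S m T x = xb"
    unfolding tbar_def
  proof (rule the_equality)
    fix xb' assume "\<exists>e f. decomp S m T x e xb' f"
    then show "xb' = xb" using ex1_decomp[OF xS] d by blast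
  qed (use d in blast)
  show "te S m T x = e"
    unfolding te_def tb
    by (rule the_equality) (use d decomp_unique_idems(1)[OF d] in blast)+
  show "tf S m T x = f"
    unfolding tf_def tb
    by (rule the_equality) (use d decomp_unique_idems(2)[OF d] in blast)+
qed

lemma decomp_tbar: "x \<in> S \<Longrightarrow> decomp S m T x (te S m T x) (tbar S m T x) (tf S m T x)"
proof -
  assume "x \<in> S"
  then obtain e xb f where "decomp S m T x e xb f" using ex1_decomp by blast
  then show ?thesis using decomp_components by simp
qed

abbreviation "tb \<equiv> tbar S m T"
abbreviation "tE \<equiv> te S m T"
abbreviation "tF \<equiv> tf S m T"

lemma components_eq:
  assumes "xb \<in> T" "e \<in> ES" "f \<in> ES" "m e (T.pl xb) = e" "m (T.pl xb) e = T.pl xb"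
    "m (T.st xb) f = f" "m f (T.st xb) = T.st xb"
  shows "tb (m (m e xb) f) = xb" "tE (m (m e xb) f) = e" "tF (m (m e xb) f) = f"
  using decomp_components assms by (simp_all add: decomp_iff)

lemma components_of_transversal: "x \<in> T \<Longrightarrow> tb x = x \<and> tE x = T.pl x \<and> tF x = T.st x"
  using components_eq[of x "T.pl x" "T.st x"] T.plus_left T.star_right T.idem
  by (simp add: assoc)

lemma tbar_in: "x \<in> S \<Longrightarrow> tb x \<in> T"
  using decomp_tbar by (simp add: decomp_iff)

lemma te_idem: "x \<in> S \<Longrightarrow> tE x \<in> ES"
  using decomp_tbar by (simp add: decomp_iff)

lemma tf_idem: "x \<in> S \<Longrightarrow> tF x \<in> ES"
  using decomp_tbar by (simp add: decomp_iff)

lemma te_tbar_tf: "x \<in> S \<Longrightarrow> x = m (m (tE x) (tb x)) (tF x)"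
  using decomp_tbar by (simp add: decomp_iff)

lemma te_L_plus: "x \<in> S \<Longrightarrow> m (tE x) (T.pl (tb x)) = tE x \<and> m (T.pl (tb x)) (tE x) = T.pl (tb x)"
  using decomp_tbar by (simp add: decomp_iff)

lemma tf_R_star: "x \<in> S \<Longrightarrow> m (T.st (tb x)) (tF x) = tF x \<and> m (tF x) (T.st (tb x)) = T.st (tb x)"
  using decomp_tbar by (simp add: decomp_iff)

end

subsection \<open>The semigroup \<open>W\<close>\<close>

locale construction =
  fixes S0 :: "'a set" and mS :: "'a \<Rightarrow> 'a \<Rightarrow> 'a" and I :: "'a set" and mI :: "'a \<Rightarrow> 'a \<Rightarrow> 'a"
    and L :: "'a set" and mL :: "'a \<Rightarrow> 'a \<Rightarrow> 'a"
    and \<alpha> :: "'a \<Rightarrow> 'a \<Rightarrow> 'a \<Rightarrow> 'a \<Rightarrow> 'a" and \<beta> :: "'a \<Rightarrow> 'a \<Rightarrow> 'a \<Rightarrow> 'a \<Rightarrow> 'a"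
  assumes construction_data: "construction_data S0 mS I mI L mL \<alpha> \<beta>"
begin

abbreviation "E0 \<equiv> idems S0 mS"
abbreviation "LL \<equiv> Lcl I mI"
abbreviation "RR \<equiv> Rcl L mL"
abbreviation "W \<equiv> Wset S0 mS I mI L mL"
abbreviation "Wm \<equiv> Wmult mS mI mL \<alpha> \<beta>"

lemmas data = construction_data[unfolded construction_data_def Let_def]

sublocale S: adequate_sgrp S0 mS
  using data by unfold_locales (elim conjE)

lemma left_regular_band_I: "left_regular_band I mI"
  using data by (elim conjE) assumption

lemma right_regular_band_L: "right_regular_band L mL"
  using data by (elim conjE) assumption

lemma I_union: "I = (\<Union>x\<in>E0. LL x)"
  using data by (elim conjE) assumption

lemma L_union: "L = (\<Union>x\<in>E0. RR x)"
  using data by (elim conjE) assumption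

lemma E0_subset: "E0 \<subseteq> I \<inter> L"
  using data by (elim conjE) assumption

lemma E0_in_I [simp]: "z \<in> E0 \<Longrightarrow> z \<in> I"
  and E0_in_L [simp]: "z \<in> E0 \<Longrightarrow> z \<in> L"
  using E0_subset by blast+

lemma semilattice_transversal_I: "semilattice_transversal I mI E0"
  using data by (elim conjE) assumption

lemma semilattice_transversal_L: "semilattice_transversal L mL E0"
  using data by (elim conjE) assumption

lemma E0_mult: "\<forall>x\<in>E0. \<forall>y\<in>E0. mI x y = mS x y \<and> mL x y = mS x y"
  using data by (elim conjE) assumption

lemma E0_mult_I: "x \<in> E0 \<Longrightarrow> y \<in> E0 \<Longrightarrow> mI x y = mS x y"
  and E0_mult_L: "x \<in> E0 \<Longrightarrow> y \<in> E0 \<Longrightarrow> mL x y = mS x y"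
  using E0_mult by blast+

lemma maps_into:
  "\<forall>x\<in>S0. \<forall>y\<in>S0. \<forall>f\<in>RR (S.st x). \<forall>g\<in>LL (S.pl y).
     \<alpha> x y f g \<in> LL (S.pl (mS x y)) \<and> \<beta> x y f g \<in> RR (S.st (mS x y))"
  using data by (elim conjE) assumption

lemma alpha_in: "x \<in> S0 \<Longrightarrow> y \<in> S0 \<Longrightarrow> f \<in> RR (S.st x) \<Longrightarrow> g \<in> LL (S.pl y) \<Longrightarrow>
    \<alpha> x y f g \<in> LL (S.pl (mS x y))"
  and beta_in: "x \<in> S0 \<Longrightarrow> y \<in> S0 \<Longrightarrow> f \<in> RR (S.st x) \<Longrightarrow> g \<in> LL (S.pl y) \<Longrightarrow>
    \<beta> x y f g \<in> RR (S.st (mS x y))"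
  using maps_into by blast+

lemma condition1:
  "\<forall>x\<in>S0. \<forall>y\<in>S0. \<forall>z\<in>S0. \<forall>f\<in>RR (S.st x). \<forall>g\<in>LL (S.pl y). \<forall>h\<in>RR (S.st y). \<forall>k\<in>LL (S.pl z).
     mI (\<alpha> x y f g) (\<alpha> (mS x y) z (mL (\<beta> x y f g) h) k) = \<alpha> x (mS y z) f (mI g (\<alpha> y z h k)) \<and>
     mL (\<beta> x (mS y z) f (mI g (\<alpha> y z h k))) (\<beta> y z h k) = \<beta> (mS x y) z (mL (\<beta> x y f g) h) k"
  using data by (elim conjE) assumption

lemma condition2:
  "\<forall>x\<in>S0. \<forall>y\<in>S0. \<alpha> x y (S.st x) (S.pl y) = S.pl (mS x y) \<and> \<beta> x y (S.st x) (S.pl y) = S.st (mS x y)"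
  using data by (elim conjE) assumption

lemma condition3:
  "\<forall>x\<in>S0. \<forall>x1\<in>S0. \<forall>x2\<in>S0. \<forall>e1\<in>LL (S.pl x1). \<forall>f1\<in>RR (S.st x1).
     \<forall>e2\<in>LL (S.pl x2). \<forall>f2\<in>RR (S.st x2). \<forall>e\<in>LL (S.pl x).
     mI e1 (\<alpha> x1 x f1 e) = mI e2 (\<alpha> x2 x f2 e) \<and> mS x1 x = mS x2 x \<and>
     mL (\<beta> x1 x f1 e) (S.st x) = mL (\<beta> x2 x f2 e) (S.st x) \<longrightarrow>
     mI e1 (\<alpha> x1 (S.pl x) f1 e) = mI e2 (\<alpha> x2 (S.pl x) f2 e) \<and> mS x1 (S.pl x) = mS x2 (S.pl x) \<and>
     \<beta> x1 (S.pl x) f1 e = \<beta> x2 (S.pl x) f2 e"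
  using data by (elim conjE) assumption

lemma condition4:
  "\<forall>x\<in>S0. \<forall>x1\<in>S0. \<forall>x2\<in>S0. \<forall>e1\<in>LL (S.pl x1). \<forall>f1\<in>RR (S.st x1).
     \<forall>e2\<in>LL (S.pl x2). \<forall>f2\<in>RR (S.st x2). \<forall>f\<in>RR (S.st x).
     mI (S.pl x) (\<alpha> x x1 f e1) = mI (S.pl x) (\<alpha> x x2 f e2) \<and> mS x x1 = mS x x2 \<and>
     mL (\<beta> x x1 f e1) f1 = mL (\<beta> x x2 f e2) f2 \<longrightarrow>
     \<alpha> (S.st x) x1 f e1 = \<alpha> (S.st x) x2 f e2 \<and> mS (S.st x) x1 = mS (S.st x) x2 \<and>
     mL (\<beta> (S.st x) x1 f e1) f1 = mL (\<beta> (S.st x) x2 f e2) f2"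
  using data by (elim conjE) assumption

lemma sgrp_I: "sgrp I mI"
  using left_regular_band_I by (simp add: left_regular_band_def band_def)

lemma sgrp_L: "sgrp L mL"
  using right_regular_band_L by (simp add: right_regular_band_def band_def)

lemma idem_I: "e \<in> I \<Longrightarrow> mI e e = e"
  using left_regular_band_I by (simp add: left_regular_band_def band_def)

lemma idem_L: "e \<in> L \<Longrightarrow> mL e e = e"
  using right_regular_band_L by (simp add: right_regular_band_def band_def)

lemma closed_I [simp]: "x \<in> I \<Longrightarrow> y \<in> I \<Longrightarrow> mI x y \<in> I"
  by (rule sgrp_closed[OF sgrp_I])

lemma closed_L [simp]: "x \<in> L \<Longrightarrow> y \<in> L \<Longrightarrow> mL x y \<in> L"
  by (rule sgrp_closed[OF sgrp_L])

lemma assoc_I: "x \<in> I \<Longrightarrow> y \<in> I \<Longrightarrow> z \<in> I \<Longrightarrow> mI (mI x y) z = mI x (mI y z)"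
  by (rule sgrp_assoc[OF sgrp_I])

lemma assoc_L: "x \<in> L \<Longrightarrow> y \<in> L \<Longrightarrow> z \<in> L \<Longrightarrow> mL (mL x y) z = mL x (mL y z)"
  by (rule sgrp_assoc[OF sgrp_L])

lemma Lcl_iff: "z \<in> E0 \<Longrightarrow> e \<in> LL z \<longleftrightarrow> e \<in> I \<and> mI e z = e \<and> mI z e = z"
  using GL_idems_iff[OF sgrp_I, of e z] idem_I by (auto simp: Lcl_def GL_def idems_iff)

lemma Rcl_iff: "z \<in> E0 \<Longrightarrow> f \<in> RR z \<longleftrightarrow> f \<in> L \<and> mL z f = f \<and> mL f z = z"
  using GR_idems_iff[OF sgrp_L, of f z] idem_L by (auto simp: Rcl_def GR_def idems_iff)

lemma Lcl_refl: "z \<in> E0 \<Longrightarrow> z \<in> LL z"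
  using Lcl_iff idem_I by simp

lemma Rcl_refl: "z \<in> E0 \<Longrightarrow> z \<in> RR z"
  using Rcl_iff idem_L by simp

lemma Lcl_mult:
  assumes p: "p \<in> E0" and q: "q \<in> E0" and e: "e \<in> LL p" and g: "g \<in> LL q" and qp: "mS q p = q"
  shows "mI e g \<in> LL q"
proof -
  have e': "e \<in> I" "mI e p = e" "mI p e = p" using Lcl_iff[OF p] e by auto
  have g': "g \<in> I" "mI g q = g" "mI q g = q" using Lcl_iff[OF q] g by auto
  have qp': "mI q p = q" using qp E0_mult_I p q by simp
  have "mI (mI e g) q = mI e (mI g q)" using e'(1) g'(1) q by (simp add: assoc_I)
  then have 1: "mI (mI e g) q = mI e g" using g' by simp
  have "mI q (mI e g) = mI (mI q p) (mI e g)" using qp' by simp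
  also have "\<dots> = mI q (mI (mI p e) g)" using e'(1) g'(1) p q by (simp add: assoc_I)
  also have "\<dots> = mI (mI q p) g" using e'(3) g'(1) p q by (simp add: assoc_I)
  also have "\<dots> = q" using qp' g' by simp
  finally show ?thesis using 1 Lcl_iff[OF q] e' g' by simp
qed

lemma Rcl_mult:
  assumes s: "s \<in> E0" and t: "t \<in> E0" and f: "f \<in> RR s" and h: "h \<in> RR t" and st: "mS s t = s"
  shows "mL f h \<in> RR s"
proof -
  have f': "f \<in> L" "mL s f = f" "mL f s = s" using Rcl_iff[OF s] f by auto
  have h': "h \<in> L" "mL t h = h" "mL h t = t" using Rcl_iff[OF t] h by auto
  have ts: "mL t s = s" using st E0_mult_L s t S.idems_commute by metis
  have "mL s (mL f h) = mL (mL s f) h" using f'(1) h'(1) s by (simp add: assoc_L)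
  then have 1: "mL s (mL f h) = mL f h" using f' by simp
  have "mL (mL f h) s = mL (mL f h) (mL t s)" using ts by simp
  also have "\<dots> = mL f (mL (mL h t) s)" using f'(1) h'(1) s t by (simp add: assoc_L)
  also have "\<dots> = s" using h' ts f' by simp
  finally show ?thesis using 1 Rcl_iff[OF s] f' h' by simp
qed

lemma Lcl_left_zero:
  assumes z: "z \<in> E0" and "e \<in> LL z" "a \<in> LL z"
  shows "mI e a = e"
proof -
  have e: "e \<in> I" "mI e z = e" and a: "a \<in> I" "mI z a = z" using assms Lcl_iff by auto
  have "mI e a = mI (mI e z) a" using e by simp
  also have "\<dots> = mI e (mI z a)" using e(1) a(1) z by (simp add: assoc_I)
  finally show ?thesis using a e by simp
qed

lemma Rcl_right_zero:
  assumes z: "z \<in> E0" and "f \<in> RR z" "b \<in> RR z"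
  shows "mL b f = f"
proof -
  have f: "f \<in> L" "mL z f = f" and b: "b \<in> L" "mL b z = z" using assms Rcl_iff by auto
  have "mL b f = mL b (mL z f)" using f by simp
  also have "\<dots> = mL (mL b z) f" using f(1) b(1) z by (simp add: assoc_L)
  finally show ?thesis using b f by simp
qed

lemma W_mem_iff: "(e, x, f) \<in> W \<longleftrightarrow> x \<in> S0 \<and> e \<in> LL (S.pl x) \<and> f \<in> RR (S.st x)"
  using Lcl_iff[OF S.plus_idem] Rcl_iff[OF S.star_idem] by (auto simp: Wset_def)

lemma Wm_simp [simp]: "Wm (e, x, f) (g, y, h) = (mI e (\<alpha> x y f g), mS x y, mL (\<beta> x y f g) h)"
  by (simp add: Wmult_def)

lemma W_closed:
  assumes "(e, x, f) \<in> W" "(g, y, h) \<in> W"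
  shows "Wm (e, x, f) (g, y, h) \<in> W"
proof -
  have x: "x \<in> S0" "e \<in> LL (S.pl x)" "f \<in> RR (S.st x)"
    and y: "y \<in> S0" "g \<in> LL (S.pl y)" "h \<in> RR (S.st y)"
    using assms W_mem_iff by auto
  have xy: "mS x y \<in> S0" using x y by simp
  have "mI e (\<alpha> x y f g) \<in> LL (S.pl (mS x y))"
    by (rule Lcl_mult[OF S.plus_idem[OF x(1)] S.plus_idem[OF xy] x(2) alpha_in[OF x(1) y(1) x(3) y(2)]
          S.plus_mult(2)[OF x(1) y(1)]])
  moreover have "mL (\<beta> x y f g) h \<in> RR (S.st (mS x y))"
    by (rule Rcl_mult[OF S.star_idem[OF xy] S.star_idem[OF y(1)] beta_in[OF x(1) y(1) x(3) y(2)] y(3)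
          S.star_mult(1)[OF x(1) y(1)]])
  ultimately show ?thesis using xy W_mem_iff by simp
qed

lemma W_assoc:
  assumes a: "(e, x, f) \<in> W" and b: "(g, y, h) \<in> W" and c: "(k, z, l) \<in> W"
  shows "Wm (Wm (e, x, f) (g, y, h)) (k, z, l) = Wm (e, x, f) (Wm (g, y, h) (k, z, l))"
proof -
  have x: "x \<in> S0" and e: "e \<in> LL (S.pl x)" and f: "f \<in> RR (S.st x)" using a W_mem_iff by auto
  have y: "y \<in> S0" and g: "g \<in> LL (S.pl y)" and h: "h \<in> RR (S.st y)" using b W_mem_iff by auto
  have z: "z \<in> S0" and k: "k \<in> LL (S.pl z)" and l: "l \<in> RR (S.st z)" using c W_mem_iff by auto
  note C = condition1[rule_format, OF x y z f g h k]
  have bh: "mL (\<beta> x y f g) h \<in> RR (S.st (mS x y))"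
    using W_closed[OF a b] W_mem_iff by simp
  have ga: "mI g (\<alpha> y z h k) \<in> LL (S.pl (mS y z))"
    using W_closed[OF b c] W_mem_iff by simp
  have in_I: "e \<in> I" "\<alpha> x y f g \<in> I" "\<alpha> (mS x y) z (mL (\<beta> x y f g) h) k \<in> I"
    using Lcl_iff e alpha_in[OF x y f g] alpha_in[OF _ z bh k] x y z by auto
  have in_L: "\<beta> x (mS y z) f (mI g (\<alpha> y z h k)) \<in> L" "\<beta> y z h k \<in> L" "l \<in> L"
    using Rcl_iff l beta_in[OF x _ f ga] beta_in[OF y z h k] x y z by auto
  have "mI (mI e (\<alpha> x y f g)) (\<alpha> (mS x y) z (mL (\<beta> x y f g) h) k)
      = mI e (mI (\<alpha> x y f g) (\<alpha> (mS x y) z (mL (\<beta> x y f g) h) k))"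
    using in_I by (simp add: assoc_I)
  also have "\<dots> = mI e (\<alpha> x (mS y z) f (mI g (\<alpha> y z h k)))"
    using C by simp
  finally have 1: "mI (mI e (\<alpha> x y f g)) (\<alpha> (mS x y) z (mL (\<beta> x y f g) h) k)
      = mI e (\<alpha> x (mS y z) f (mI g (\<alpha> y z h k)))" .
  have "mL (\<beta> x (mS y z) f (mI g (\<alpha> y z h k))) (mL (\<beta> y z h k) l)
      = mL (mL (\<beta> x (mS y z) f (mI g (\<alpha> y z h k))) (\<beta> y z h k)) l"
    using in_L by (simp add: assoc_L)
  also have "\<dots> = mL (\<beta> (mS x y) z (mL (\<beta> x y f g) h) k) l"
    using C by simp
  finally have 2: "mL (\<beta> x (mS y z) f (mI g (\<alpha> y z h k))) (mL (\<beta> y z h k) l)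
      = mL (\<beta> (mS x y) z (mL (\<beta> x y f g) h) k) l" .
  show ?thesis using 1 2 x y z by (simp add: S.assoc)
qed

lemma W_closed': "a \<in> W \<Longrightarrow> b \<in> W \<Longrightarrow> Wm a b \<in> W"
  using W_closed by (cases a, cases b) auto

lemma sgrp_W: "sgrp W Wm"
  unfolding sgrp_def
proof (intro conjI ballI W_closed')
  fix a b c assume "a \<in> W" "b \<in> W" "c \<in> W"
  then show "Wm (Wm a b) c = Wm a (Wm b c)"
    using W_assoc by (cases a, cases b, cases c) blast
qed

lemma W_assoc': "a \<in> W \<Longrightarrow> b \<in> W \<Longrightarrow> c \<in> W \<Longrightarrow> Wm (Wm a b) c = Wm a (Wm b c)"
  using sgrp_W by (simp add: sgrp_def)

lemma W_idems_iff:
  assumes a: "(e, x, f) \<in> W"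
  shows "(e, x, f) \<in> idems W Wm \<longleftrightarrow> x \<in> E0"
proof
  assume "(e, x, f) \<in> idems W Wm"
  then show "x \<in> E0" using a W_mem_iff by (simp add: idems_iff)
next
  assume x0: "x \<in> E0"
  have x: "x \<in> S0" and e: "e \<in> LL (S.pl x)" and f: "f \<in> RR (S.st x)" using a W_mem_iff by auto
  have px: "S.pl x = x" "S.st x = x" "mS x x = x" using x0 S.idem by auto
  have "mI e (\<alpha> x x f e) = e"
    using Lcl_left_zero[OF S.plus_idem[OF x] e] alpha_in[OF x x f e] px by simp
  moreover have "mL (\<beta> x x f e) f = f"
    using Rcl_right_zero[OF S.star_idem[OF x] f] beta_in[OF x x f e] px by simp
  ultimately show "(e, x, f) \<in> idems W Wm" using a px by (simp add: idems_iff)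
qed

lemma W_parts_in:
  assumes "(e, x, f) \<in> W"
  shows "(e, S.pl x, S.pl x) \<in> W" "(S.pl x, x, f) \<in> W" "(e, x, S.st x) \<in> W" "(S.st x, S.st x, f) \<in> W"
  using assms Lcl_refl Rcl_refl by (simp_all add: W_mem_iff)

lemma W_plus_idem: "(e, x, f) \<in> W \<Longrightarrow> (e, S.pl x, S.pl x) \<in> idems W Wm"
  using W_idems_iff W_parts_in(1) W_mem_iff by auto

lemma W_star_idem: "(e, x, f) \<in> W \<Longrightarrow> (S.st x, S.st x, f) \<in> idems W Wm"
  using W_idems_iff W_parts_in(4) W_mem_iff by auto

lemma W_factor:
  assumes "(e, x, f) \<in> W"
  shows "Wm (e, S.pl x, S.pl x) (S.pl x, x, f) = (e, x, f)"
    "Wm (e, x, S.st x) (S.st x, S.st x, f) = (e, x, f)"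
proof -
  have x: "x \<in> S0" and e: "e \<in> LL (S.pl x)" and f: "f \<in> RR (S.st x)" using assms W_mem_iff by auto
  have "mI e (S.pl x) = e" "mL (S.st x) f = f"
    using Lcl_iff[OF S.plus_idem[OF x]] Rcl_iff[OF S.star_idem[OF x]] e f by auto
  then show "Wm (e, S.pl x, S.pl x) (S.pl x, x, f) = (e, x, f)"
    "Wm (e, x, S.st x) (S.st x, S.st x, f) = (e, x, f)"
    using condition2[rule_format, of "S.pl x" x] condition2[rule_format, of x "S.st x"]
      S.plus_left[OF x] S.star_right[OF x] x by simp_all
qed

lemma W_plus_left:
  assumes a: "(e, x, f) \<in> W"
  shows "Wm (e, S.pl x, S.pl x) (e, x, f) = (e, x, f)"
proof -
  let ?p = "(e, S.pl x, S.pl x)"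
  have "Wm ?p (e, x, f) = Wm (Wm ?p ?p) (S.pl x, x, f)"
    using W_factor(1)[OF a] W_assoc'[OF W_parts_in(1,1,2)[OF a]] by simp
  also have "\<dots> = (e, x, f)"
    using W_plus_idem[OF a] W_factor(1)[OF a] by (simp add: idems_iff del: Wm_simp)
  finally show ?thesis .
qed

lemma W_star_right:
  assumes a: "(e, x, f) \<in> W"
  shows "Wm (e, x, f) (S.st x, S.st x, f) = (e, x, f)"
proof -
  let ?s = "(S.st x, S.st x, f)"
  have "Wm (e, x, f) ?s = Wm (e, x, S.st x) (Wm ?s ?s)"
    using W_factor(2)[OF a] W_assoc'[OF W_parts_in(3,4,4)[OF a]] by simp
  also have "\<dots> = (e, x, f)"
    using W_star_idem[OF a] W_factor(2)[OF a] by (simp add: idems_iff del: Wm_simp)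
  finally show ?thesis .
qed

text \<open>Condition 3 says exactly that right cancellation of \<open>(e, x, f)\<close> passes to \<open>(e, x\<^sup>+, x\<^sup>+)\<close>,
  and condition 4 is its left-handed counterpart.\<close>

lemma W_cancel_plus:
  assumes a: "(e, x, f) \<in> W" and "u1 \<in> W" "u2 \<in> W" and "Wm u1 (e, x, f) = Wm u2 (e, x, f)"
  shows "Wm u1 (e, S.pl x, S.pl x) = Wm u2 (e, S.pl x, S.pl x)"
proof -
  obtain e1 x1 f1 e2 x2 f2 where u: "u1 = (e1, x1, f1)" "u2 = (e2, x2, f2)" by (cases u1, cases u2) auto
  have u1: "(e1, x1, f1) \<in> W" and u2: "(e2, x2, f2) \<in> W"
    and eq: "Wm (e1, x1, f1) (e, x, f) = Wm (e2, x2, f2) (e, x, f)" using assms u by simp_all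
  have x: "x \<in> S0" and e: "e \<in> LL (S.pl x)" and f: "f \<in> RR (S.st x)" using a W_mem_iff by auto
  have x1: "x1 \<in> S0" and e1: "e1 \<in> LL (S.pl x1)" and f1: "f1 \<in> RR (S.st x1)"
    using u1 W_mem_iff by auto
  have x2: "x2 \<in> S0" and e2: "e2 \<in> LL (S.pl x2)" and f2: "f2 \<in> RR (S.st x2)"
    using u2 W_mem_iff by auto
  have fL: "f \<in> L" "mL f (S.st x) = S.st x" using Rcl_iff[OF S.star_idem[OF x]] f by auto
  have b1: "\<beta> x1 x f1 e \<in> L" and b2: "\<beta> x2 x f2 e \<in> L"
    using Rcl_iff beta_in[OF x1 x f1 e] beta_in[OF x2 x f2 e] x1 x2 x by auto
  have "mL (\<beta> x1 x f1 e) (S.st x) = mL (mL (\<beta> x1 x f1 e) f) (S.st x)"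
    using fL b1 x by (simp add: assoc_L)
  also have "\<dots> = mL (mL (\<beta> x2 x f2 e) f) (S.st x)" using eq by simp
  also have "\<dots> = mL (\<beta> x2 x f2 e) (S.st x)" using fL b2 x by (simp add: assoc_L)
  finally have "mL (\<beta> x1 x f1 e) (S.st x) = mL (\<beta> x2 x f2 e) (S.st x)" .
  then show ?thesis
    using condition3[rule_format, OF x x1 x2 e1 f1 e2 f2 e] eq u by simp
qed

lemma W_cancel_star:
  assumes a: "(e, x, f) \<in> W" and "u1 \<in> W" "u2 \<in> W" and "Wm (e, x, f) u1 = Wm (e, x, f) u2"
  shows "Wm (S.st x, S.st x, f) u1 = Wm (S.st x, S.st x, f) u2"
proof -
  obtain e1 x1 f1 e2 x2 f2 where u: "u1 = (e1, x1, f1)" "u2 = (e2, x2, f2)" by (cases u1, cases u2) auto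
  have u1: "(e1, x1, f1) \<in> W" and u2: "(e2, x2, f2) \<in> W"
    and eq: "Wm (e, x, f) (e1, x1, f1) = Wm (e, x, f) (e2, x2, f2)" using assms u by simp_all
  have x: "x \<in> S0" and e: "e \<in> LL (S.pl x)" and f: "f \<in> RR (S.st x)" using a W_mem_iff by auto
  have x1: "x1 \<in> S0" and e1: "e1 \<in> LL (S.pl x1)" and f1: "f1 \<in> RR (S.st x1)"
    using u1 W_mem_iff by auto
  have x2: "x2 \<in> S0" and e2: "e2 \<in> LL (S.pl x2)" and f2: "f2 \<in> RR (S.st x2)"
    using u2 W_mem_iff by auto
  have eI: "e \<in> I" "mI (S.pl x) e = S.pl x" using Lcl_iff[OF S.plus_idem[OF x]] e by auto
  have a1: "\<alpha> x x1 f e1 \<in> I" and a2: "\<alpha> x x2 f e2 \<in> I"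
    using Lcl_iff alpha_in[OF x x1 f e1] alpha_in[OF x x2 f e2] x1 x2 x by auto
  have "mI (S.pl x) (\<alpha> x x1 f e1) = mI (S.pl x) (mI e (\<alpha> x x1 f e1))"
    using eI a1 x by (simp flip: assoc_I)
  also have "\<dots> = mI (S.pl x) (mI e (\<alpha> x x2 f e2))" using eq by simp
  also have "\<dots> = mI (S.pl x) (\<alpha> x x2 f e2)" using eI a2 x by (simp flip: assoc_I)
  finally have "mI (S.pl x) (\<alpha> x x1 f e1) = mI (S.pl x) (\<alpha> x x2 f e2)" .
  then show ?thesis
    using condition4[rule_format, OF x x1 x2 e1 f1 e2 f2 f] eq u by simp
qed

lemma W_Rstar_plus: "(e, x, f) \<in> W \<Longrightarrow> Rstar W Wm (e, x, f) (e, S.pl x, S.pl x)"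
  by (rule Rstar_idemI[OF sgrp_W _ W_plus_idem W_plus_left W_cancel_plus])

lemma W_Lstar_star: "(e, x, f) \<in> W \<Longrightarrow> Lstar W Wm (e, x, f) (S.st x, S.st x, f)"
  by (rule Lstar_idemI[OF sgrp_W _ W_star_idem W_star_right W_cancel_star])

lemma abundant_W: "abundant W Wm"
  unfolding abundant_def
  using sgrp_W W_Rstar_plus W_Lstar_star W_plus_idem W_star_idem by (metis prod_cases3)

lemma quasi_adequate_W: "quasi_adequate W Wm"
  unfolding quasi_adequate_def
proof (intro conjI ballI abundant_W)
  fix a b assume a: "a \<in> idems W Wm" and b: "b \<in> idems W Wm"
  obtain e x f g y h where ab: "a = (e, x, f)" "b = (g, y, h)" by (cases a, cases b) auto
  have W: "a \<in> W" "b \<in> W" using a b by (simp_all add: idems_iff)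
  then have "x \<in> E0" "y \<in> E0" using W_idems_iff a b ab by auto
  with W_closed'[OF W] show "Wm a b \<in> idems W Wm"
    using W_idems_iff ab by simp
qed

subsection \<open>The transversal of \<open>W\<close>\<close>

definition psi :: "'a \<Rightarrow> 'a \<times> 'a \<times> 'a" where
  "psi x = (S.pl x, x, S.st x)"

definition T0 :: "('a \<times> 'a \<times> 'a) set" where
  "T0 = psi ` S0"

lemma psi_in_W: "x \<in> S0 \<Longrightarrow> psi x \<in> W"
  using Lcl_refl Rcl_refl W_mem_iff by (simp add: psi_def)

lemma psi_mult: "x \<in> S0 \<Longrightarrow> y \<in> S0 \<Longrightarrow> Wm (psi x) (psi y) = psi (mS x y)"
  using condition2 S.plus_mult(1) S.star_mult(1) E0_mult_I E0_mult_L by (simp add: psi_def)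

lemma psi_of_idem: "z \<in> E0 \<Longrightarrow> psi z = (z, z, z)"
  by (simp add: psi_def)

lemma psi_idem_in_W: "z \<in> E0 \<Longrightarrow> psi z \<in> idems W Wm"
  using W_idems_iff psi_in_W psi_of_idem by (metis S.idems_in)

lemma psi_isomorphism: "sgrp_isomorphism S0 mS T0 Wm psi"
proof
  show "bij_betw psi S0 T0"
    unfolding bij_betw_def T0_def by (auto simp: inj_on_def psi_def)
qed (simp_all add: psi_mult S.sgrp)

interpretation psi: sgrp_isomorphism S0 mS T0 Wm psi
  by (rule psi_isomorphism)

lemma adequate_T0: "adequate T0 Wm"
  using psi.adequate_B S.adequate .

lemma aplus_T0: "x \<in> S0 \<Longrightarrow> aplus T0 Wm (psi x) = psi (S.pl x)"
  using aplus_eq[OF adequate_T0] psi.idems_image_iff psi.Rstar_iff S.plus_Rstar by simp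

lemma astar_T0: "x \<in> S0 \<Longrightarrow> astar T0 Wm (psi x) = psi (S.st x)"
  using astar_eq[OF adequate_T0] psi.idems_image_iff psi.Lstar_iff S.star_Lstar by simp

lemma Rstar_W_psi_iff:
  assumes x: "x \<in> S0" and y: "y \<in> S0"
  shows "Rstar W Wm (psi x) (psi y) \<longleftrightarrow> S.pl x = S.pl y"
proof -
  have rx: "Rstar W Wm (psi x) (psi (S.pl x))" and ry: "Rstar W Wm (psi y) (psi (S.pl y))"
    using W_Rstar_plus psi_in_W x y by (simp_all add: psi_def)
  have ix: "psi (S.pl x) \<in> idems W Wm" and iy: "psi (S.pl y) \<in> idems W Wm"
    using psi_idem_in_W x y by simp_all
  show ?thesis
  proof
    assume "Rstar W Wm (psi x) (psi y)"
    then have "Rstar W Wm (psi (S.pl x)) (psi (S.pl y))"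
      using rx ry Rstar_trans Rstar_sym by metis
    then have "mS (S.pl y) (S.pl x) = S.pl x" "mS (S.pl x) (S.pl y) = S.pl y"
      using Rstar_idems[OF _ ix iy] psi_mult x y by (simp_all add: psi_def)
    then show "S.pl x = S.pl y"
      using S.idems_commute x y by (metis S.plus_idem)
  qed (use rx ry Rstar_trans Rstar_sym in metis)
qed

lemma Lstar_W_psi_iff:
  assumes x: "x \<in> S0" and y: "y \<in> S0"
  shows "Lstar W Wm (psi x) (psi y) \<longleftrightarrow> S.st x = S.st y"
proof -
  have lx: "Lstar W Wm (psi x) (psi (S.st x))" and ly: "Lstar W Wm (psi y) (psi (S.st y))"
    using W_Lstar_star psi_in_W x y by (simp_all add: psi_def)
  have ix: "psi (S.st x) \<in> idems W Wm" and iy: "psi (S.st y) \<in> idems W Wm"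
    using psi_idem_in_W x y by simp_all
  show ?thesis
  proof
    assume "Lstar W Wm (psi x) (psi y)"
    then have "Lstar W Wm (psi (S.st x)) (psi (S.st y))"
      using lx ly Lstar_trans Lstar_sym by metis
    then have "mS (S.st x) (S.st y) = S.st x" "mS (S.st y) (S.st x) = S.st y"
      using Lstar_idems[OF _ ix iy] psi_mult x y by (simp_all add: psi_def)
    then show "S.st x = S.st y"
      using S.idems_commute x y by (metis S.star_idem)
  qed (use lx ly Lstar_trans Lstar_sym in metis)
qed

lemma star_subsgrp_T0: "star_subsgrp T0 W Wm"
  unfolding star_subsgrp_def
proof (intro conjI ballI)
  show "T0 \<subseteq> W" using psi_in_W by (auto simp: T0_def)
  show "abundant T0 Wm" using adequate_T0 by (simp add: adequate_def)
  fix a b assume "a \<in> T0" "b \<in> T0"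
  then obtain x y where "x \<in> S0" "a = psi x" "y \<in> S0" "b = psi y" by (auto simp: T0_def)
  then show "Lstar T0 Wm a b \<longleftrightarrow> Lstar W Wm a b" "Rstar T0 Wm a b \<longleftrightarrow> Rstar W Wm a b"
    using psi.Lstar_iff psi.Rstar_iff S.Lstar_iff_star_eq S.Rstar_iff_plus_eq
      Lstar_W_psi_iff Rstar_W_psi_iff by simp_all
qed

lemma W_GL_idem:
  assumes z: "z \<in> E0" and e: "e \<in> LL z"
  shows "GL W Wm (e, z, z) (z, z, z)"
proof -
  have w: "(e, z, z) \<in> W" using z e Rcl_refl W_mem_iff by simp
  have a: "\<alpha> z z z e \<in> LL z" and b: "\<beta> z z z e \<in> RR z"
    using alpha_in[of z z z e] beta_in[of z z z e] z e Rcl_refl S.idem by simp_all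
  have "Wm (e, z, z) (z, z, z) = (e, z, z)"
    using condition2[rule_format, of z z] Lcl_iff[OF z] e z S.idem E0_mult_L by simp
  moreover have "Wm (z, z, z) (e, z, z) = (z, z, z)"
    using Lcl_iff[OF z] Rcl_iff[OF z] a b z S.idem by simp
  ultimately show ?thesis
    using GL_idems_iff[OF sgrp_W] W_plus_idem[OF w] psi_idem_in_W[OF z] z by (simp add: psi_def)
qed

lemma W_GR_idem:
  assumes z: "z \<in> E0" and f: "f \<in> RR z"
  shows "GR W Wm (z, z, f) (z, z, z)"
proof -
  have w: "(z, z, f) \<in> W" using z f Lcl_refl W_mem_iff by simp
  have a: "\<alpha> z z f z \<in> LL z" and b: "\<beta> z z f z \<in> RR z"
    using alpha_in[of z z f z] beta_in[of z z f z] z f Lcl_refl S.idem by simp_all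
  have "Wm (z, z, z) (z, z, f) = (z, z, f)"
    using condition2[rule_format, of z z] Rcl_iff[OF z] f z S.idem E0_mult_I by simp
  moreover have "Wm (z, z, f) (z, z, z) = (z, z, z)"
    using Lcl_iff[OF z] Rcl_iff[OF z] a b z S.idem by simp
  ultimately show ?thesis
    using GR_idems_iff[OF sgrp_W] W_star_idem[OF w] psi_idem_in_W[OF z] z by (simp add: psi_def)
qed

lemma W_decomp:
  assumes a: "(e, x, f) \<in> W"
  shows "decomp W Wm T0 (e, x, f) (e, S.pl x, S.pl x) (psi x) (S.st x, S.st x, f)"
proof -
  have x: "x \<in> S0" and e: "e \<in> LL (S.pl x)" and f: "f \<in> RR (S.st x)" using a W_mem_iff by auto
  have "Wm (e, S.pl x, S.pl x) (psi x) = (e, x, S.st x)"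
    using W_factor(1)[OF W_parts_in(3)[OF a]] by (simp add: psi_def)
  then have "(e, x, f) = Wm (Wm (e, S.pl x, S.pl x) (psi x)) (S.st x, S.st x, f)"
    using W_factor(2)[OF a] by simp
  then show ?thesis
    unfolding decomp_def
    using x W_plus_idem[OF a] W_star_idem[OF a] aplus_T0[OF x] astar_T0[OF x]
      W_GL_idem[OF S.plus_idem[OF x] e] W_GR_idem[OF S.star_idem[OF x] f]
    by (simp add: T0_def psi_of_idem)
qed

lemma W_decomp_unique:
  assumes a: "(e, x, f) \<in> W" and d: "decomp W Wm T0 (e, x, f) e' xb f'"
  shows "xb = psi x"
proof -
  have xb: "xb \<in> T0" and e': "e' \<in> idems W Wm" and f': "f' \<in> idems W Wm"
    and w: "(e, x, f) = Wm (Wm e' xb) f'" and gl: "GL W Wm e' (aplus T0 Wm xb)"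
    and gr: "GR W Wm f' (astar T0 Wm xb)" using d by (simp_all add: decomp_def)
  obtain z where z: "z \<in> S0" "xb = psi z" using xb by (auto simp: T0_def)
  obtain e1 u f1 g1 v h1 where ed: "e' = (e1, u, f1)" and fd: "f' = (g1, v, h1)"
    by (cases e', cases f') auto
  have u: "u \<in> E0" and v: "v \<in> E0"
    using W_idems_iff e' f' ed fd by (auto simp: idems_iff)
  have "Wm e' (psi (S.pl z)) = e' \<and> Wm (psi (S.pl z)) e' = psi (S.pl z)"
    using GL_idems_iff[OF sgrp_W e' psi_idem_in_W] gl aplus_T0 z by simp
  then have "mS u (S.pl z) = u" "mS (S.pl z) u = S.pl z" using ed z by (simp_all add: psi_def)
  then have u': "u = S.pl z" using S.idems_commute u z by (metis S.plus_idem)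
  have "Wm (psi (S.st z)) f' = f' \<and> Wm f' (psi (S.st z)) = psi (S.st z)"
    using GR_idems_iff[OF sgrp_W f' psi_idem_in_W] gr astar_T0 z by simp
  then have "mS (S.st z) v = v" "mS v (S.st z) = S.st z" using fd z by (simp_all add: psi_def)
  then have v': "v = S.st z" using S.idems_commute v z by (metis S.star_idem)
  have "x = mS (mS u z) v" using w ed fd z by (simp add: psi_def)
  then show ?thesis using u' v' S.plus_left S.star_right z by simp
qed

lemma tbar_W: "(e, x, f) \<in> W \<Longrightarrow> tbar W Wm T0 (e, x, f) = psi x"
  unfolding tbar_def using W_decomp W_decomp_unique by blast

lemma adequate_transversal_T0: "adequate_transversal W Wm T0"
  unfolding adequate_transversal_def
  using abundant_W adequate_T0 star_subsgrp_T0 W_decomp W_decomp_unique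
  by (metis prod_cases3)

lemma admissible_transversal_T0: "admissible_transversal W Wm T0"
  unfolding admissible_transversal_def
proof (intro conjI ballI quasi_adequate_W adequate_transversal_T0)
  fix a b assume ab: "a \<in> W" "b \<in> W"
  obtain e x f g y h where abd: "a = (e, x, f)" "b = (g, y, h)" by (cases a, cases b) auto
  have "tbar W Wm T0 (Wm a b) = psi (mS x y)"
    using tbar_W W_closed'[OF ab] abd by (metis Wm_simp)
  then show "tbar W Wm T0 (Wm a b) = Wm (tbar W Wm T0 a) (tbar W Wm T0 b)"
    using tbar_W psi_mult W_mem_iff ab abd by simp
qed

lemma T0_iso_S0: "sgrp_iso T0 Wm S0 mS"
  unfolding sgrp_iso_def
proof (intro exI conjI)
  show "bij_betw (\<lambda>w. fst (snd w)) T0 S0"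
    unfolding bij_betw_def T0_def by (auto simp: inj_on_def psi_def image_iff)
  show "\<forall>a\<in>T0. \<forall>b\<in>T0. fst (snd (Wm a b)) = mS (fst (snd a)) (fst (snd b))"
    by (auto simp: T0_def psi_mult) (simp add: psi_def)
qed

interpretation TW: transversal W Wm T0
  using adequate_transversal_T0 by unfold_locales

lemma inv0_I:
  assumes z: "z \<in> E0" and e: "e \<in> LL z"
  shows "inv0 mI E0 e = z"
proof -
  have e': "e \<in> I" "mI e z = e" "mI z e = z" using Lcl_iff[OF z] e by auto
  have "\<exists>!e0. e0 \<in> E0 \<and> inverse_in mI e e0"
    using semilattice_transversal_I e'(1) by (simp add: semilattice_transversal_def)
  moreover have "z \<in> E0 \<and> inverse_in mI e z" using z e' idem_I by (simp add: inverse_in_def)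
  ultimately show ?thesis unfolding inv0_def by (rule the1_equality)
qed

lemma inv0_L:
  assumes z: "z \<in> E0" and f: "f \<in> RR z"
  shows "inv0 mL E0 f = z"
proof -
  have f': "f \<in> L" "mL z f = f" "mL f z = z" using Rcl_iff[OF z] f by auto
  have "\<exists>!e0. e0 \<in> E0 \<and> inverse_in mL f e0"
    using semilattice_transversal_L f'(1) by (simp add: semilattice_transversal_def)
  moreover have "z \<in> E0 \<and> inverse_in mL f z" using z f' idem_L by (simp add: inverse_in_def)
  ultimately show ?thesis unfolding inv0_def by (rule the1_equality)
qed

lemma Iset_W: "Iset W Wm T0 = {(e, z, z) | e z. z \<in> E0 \<and> e \<in> LL z}"
proof (intro equalityI subsetI)
  fix a assume "a \<in> Iset W Wm T0"
  then obtain e x f where w: "(e, x, f) \<in> W" "a = te W Wm T0 (e, x, f)"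
    by (auto simp: Iset_def)
  then have "a = (e, S.pl x, S.pl x)" "x \<in> S0" "e \<in> LL (S.pl x)"
    using TW.decomp_components(2)[OF W_decomp] W_mem_iff by auto
  then show "a \<in> {(e, z, z) | e z. z \<in> E0 \<and> e \<in> LL z}" by auto
next
  fix a assume "a \<in> {(e, z, z) | e z. z \<in> E0 \<and> e \<in> LL z}"
  then obtain e z where a: "a = (e, z, z)" "z \<in> E0" "e \<in> LL z" by blast
  then have w: "(e, z, z) \<in> W" using Rcl_refl W_mem_iff by simp
  then have "te W Wm T0 (e, z, z) = a"
    using TW.decomp_components(2)[OF W_decomp] a by simp
  then show "a \<in> Iset W Wm T0" using w unfolding Iset_def by (metis imageI)
qed

lemma Lamset_W: "Lamset W Wm T0 = {(z, z, f) | f z. z \<in> E0 \<and> f \<in> RR z}"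
proof (intro equalityI subsetI)
  fix a assume "a \<in> Lamset W Wm T0"
  then obtain e x f where w: "(e, x, f) \<in> W" "a = tf W Wm T0 (e, x, f)"
    by (auto simp: Lamset_def)
  then have "a = (S.st x, S.st x, f)" "x \<in> S0" "f \<in> RR (S.st x)"
    using TW.decomp_components(3)[OF W_decomp] W_mem_iff by auto
  then show "a \<in> {(z, z, f) | f z. z \<in> E0 \<and> f \<in> RR z}" by auto
next
  fix a assume "a \<in> {(z, z, f) | f z. z \<in> E0 \<and> f \<in> RR z}"
  then obtain f z where a: "a = (z, z, f)" "z \<in> E0" "f \<in> RR z" by blast
  then have w: "(z, z, f) \<in> W" using Lcl_refl W_mem_iff by simp
  then have "tf W Wm T0 (z, z, f) = a"
    using TW.decomp_components(3)[OF W_decomp] a by simp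
  then show "a \<in> Lamset W Wm T0" using w unfolding Lamset_def by (metis imageI)
qed

lemma Iset_iso_I:
  assumes c5: "condition5 S0 mS I mI L mL \<alpha> \<beta>"
  shows "sgrp_iso (Iset W Wm T0) Wm I mI"
  unfolding sgrp_iso_def Iset_W
proof (intro exI conjI)
  let ?A = "{(e, z, z) | e z. z \<in> E0 \<and> e \<in> LL z}"
  show "bij_betw fst ?A I"
    unfolding bij_betw_def
  proof
    show "inj_on fst ?A"
    proof (rule inj_onI)
      fix a b assume "a \<in> ?A" "b \<in> ?A" "fst a = fst b"
      then obtain e z z' where "a = (e, z, z)" "b = (e, z', z')" "z \<in> E0" "z' \<in> E0"
        "e \<in> LL z" "e \<in> LL z'"
        by auto
      then show "a = b" using inv0_I by metis
    qed
    show "fst ` ?A = I"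
      using I_union Lcl_iff by (auto simp: image_iff) force
  qed
  show "\<forall>a\<in>?A. \<forall>b\<in>?A. fst (Wm a b) = mI (fst a) (fst b)"
  proof (intro ballI)
    fix a b assume "a \<in> ?A" "b \<in> ?A"
    then obtain e p g q where ab: "a = (e, p, p)" "b = (g, q, q)" "p \<in> E0" "q \<in> E0"
      and e: "e \<in> LL p" and g: "g \<in> LL q"
      by auto
    have e': "e \<in> I" "mI e p = e" and gI: "g \<in> I" using Lcl_iff e g ab by auto
    \<comment> \<open>condition 5 at \<open>f = p\<close>, using \<open>p\<^sup>0 = p\<close> and \<open>g\<^sup>0 = q\<close>\<close>
    have "\<alpha> p q p g = mI p g"
      using c5 gI ab inv0_L[OF ab(3) Rcl_refl[OF ab(3)]] inv0_I[OF ab(4) g]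
      unfolding condition5_def Let_def by (metis E0_in_L)
    moreover have "mI e (mI p g) = mI e g"
      using e' gI ab by (simp flip: assoc_I)
    ultimately show "fst (Wm a b) = mI (fst a) (fst b)" using ab by simp
  qed
qed

lemma Lamset_iso_L:
  assumes c5: "condition5 S0 mS I mI L mL \<alpha> \<beta>"
  shows "sgrp_iso (Lamset W Wm T0) Wm L mL"
  unfolding sgrp_iso_def Lamset_W
proof (intro exI conjI)
  let ?A = "{(z, z, f) | f z. z \<in> E0 \<and> f \<in> RR z}"
  let ?g = "\<lambda>w. snd (snd w)"
  show "bij_betw ?g ?A L"
    unfolding bij_betw_def
  proof
    show "inj_on ?g ?A"
    proof (rule inj_onI)
      fix a b assume "a \<in> ?A" "b \<in> ?A" "?g a = ?g b"
      then obtain f z z' where "a = (z, z, f)" "b = (z', z', f)" "z \<in> E0" "z' \<in> E0"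
        "f \<in> RR z" "f \<in> RR z'"
        by auto
      then show "a = b" using inv0_L by metis
    qed
    show "?g ` ?A = L"
      using L_union Rcl_iff by (auto simp: image_iff) force
  qed
  show "\<forall>a\<in>?A. \<forall>b\<in>?A. ?g (Wm a b) = mL (?g a) (?g b)"
  proof (intro ballI)
    fix a b assume "a \<in> ?A" "b \<in> ?A"
    then obtain f p h q where ab: "a = (p, p, f)" "b = (q, q, h)" "p \<in> E0" "q \<in> E0"
      and f: "f \<in> RR p" and h: "h \<in> RR q"
      by auto
    have fL: "f \<in> L" and h': "h \<in> L" "mL q h = h" using Rcl_iff f h ab by auto
    have "\<beta> p q f q = mL f q"
      using c5 fL ab inv0_L[OF ab(3) f] inv0_I[OF ab(4) Lcl_refl[OF ab(4)]]
      unfolding condition5_def Let_def by (metis E0_in_I)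
    moreover have "mL (mL f q) h = mL f h"
      using fL h' ab by (simp add: assoc_L)
    ultimately show "?g (Wm a b) = mL (?g a) (?g b)" using ab by simp
  qed
qed

lemma W_quasi_adequate_with_transversal:
  "quasi_adequate W Wm \<and>
   (\<exists>T. admissible_transversal W Wm T \<and> sgrp_iso T Wm S0 mS \<and>
        (condition5 S0 mS I mI L mL \<alpha> \<beta> \<longrightarrow>
           sgrp_iso (Iset W Wm T) Wm I mI \<and> sgrp_iso (Lamset W Wm T) Wm L mL))"
  using quasi_adequate_W admissible_transversal_T0 T0_iso_S0 Iset_iso_I Lamset_iso_L by blast

end

subsection \<open>Every admissible transversal arises from the construction\<close>

locale admissible =
  fixes S :: "'a set" and m :: "'a \<Rightarrow> 'a \<Rightarrow> 'a" and T :: "'a set"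
  assumes admissible_transversal: "admissible_transversal S m T"
begin

sublocale transversal S m T
  using admissible_transversal by unfold_locales (simp add: admissible_transversal_def)

lemma tbar_mult: "x \<in> S \<Longrightarrow> y \<in> S \<Longrightarrow> tb (m x y) = m (tb x) (tb y)"
  using admissible_transversal by (simp add: admissible_transversal_def)

lemma idems_closed_S [simp]: "e \<in> ES \<Longrightarrow> f \<in> ES \<Longrightarrow> m e f \<in> ES"
  using admissible_transversal by (simp add: admissible_transversal_def quasi_adequate_def)

definition IS :: "'a set" where
  "IS = Iset S m T"

definition LS :: "'a set" where
  "LS = Lamset S m T"

lemma components_of_L_idem:
  assumes "e \<in> ES" "z \<in> E0" "m e z = e" "m z e = z"
  shows "tb e = z \<and> tE e = e \<and> tF e = z"
  using components_eq[of z e z] assms T.plus_of_idem T.star_of_idem T.idem by simp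

lemma components_of_R_idem:
  assumes "f \<in> ES" "z \<in> E0" "m z f = f" "m f z = z"
  shows "tb f = z \<and> tE f = z \<and> tF f = f"
  using components_eq[of z z f] assms T.plus_of_idem T.star_of_idem T.idem by (simp add: assoc)

lemma IS_iff: "e \<in> IS \<longleftrightarrow> e \<in> ES \<and> (\<exists>z\<in>E0. m e z = e \<and> m z e = z)"
proof
  assume "e \<in> IS"
  then obtain x where x: "x \<in> S" "e = tE x" by (auto simp: IS_def Iset_def)
  then show "e \<in> ES \<and> (\<exists>z\<in>E0. m e z = e \<and> m z e = z)"
    using te_idem[OF x(1)] te_L_plus[OF x(1)] T.plus_idem[OF tbar_in[OF x(1)]] x(2) by blast
next
  assume "e \<in> ES \<and> (\<exists>z\<in>E0. m e z = e \<and> m z e = z)"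
  then obtain z where "e \<in> ES" "z \<in> E0" "m e z = e" "m z e = z" by blast
  then have "tE e = e" using components_of_L_idem by blast
  then show "e \<in> IS" using \<open>e \<in> ES\<close> unfolding IS_def Iset_def by (metis idems_in imageI)
qed

lemma LS_iff: "f \<in> LS \<longleftrightarrow> f \<in> ES \<and> (\<exists>z\<in>E0. m z f = f \<and> m f z = z)"
proof
  assume "f \<in> LS"
  then obtain x where x: "x \<in> S" "f = tF x" by (auto simp: LS_def Lamset_def)
  then show "f \<in> ES \<and> (\<exists>z\<in>E0. m z f = f \<and> m f z = z)"
    using tf_idem[OF x(1)] tf_R_star[OF x(1)] T.star_idem[OF tbar_in[OF x(1)]] x(2) by blast
next
  assume "f \<in> ES \<and> (\<exists>z\<in>E0. m z f = f \<and> m f z = z)"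
  then obtain z where "f \<in> ES" "z \<in> E0" "m z f = f" "m f z = z" by blast
  then have "tF f = f" using components_of_R_idem by blast
  then show "f \<in> LS" using \<open>f \<in> ES\<close> unfolding LS_def Lamset_def by (metis idems_in imageI)
qed

lemma L_idems_mult:
  assumes mem: "e \<in> ES" "g \<in> ES" "p \<in> E0" "q \<in> E0"
    and eq: "m e p = e" "m p e = p" "m g q = g" "m q g = q" "m q p = q"
  shows "m (m e g) q = m e g \<and> m q (m e g) = q"
proof
  have "m (m e g) q = m e (m g q)" using mem by (simp add: assoc)
  then show "m (m e g) q = m e g" using eq by simp
  have "m q (m e g) = m (m q p) (m e g)" using eq by simp
  also have "\<dots> = m q (m (m p e) g)" using mem by (simp add: assoc)
  also have "\<dots> = m q (m p g)" using eq by simp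
  also have "\<dots> = m (m q p) g" using mem by (simp add: assoc)
  also have "\<dots> = q" using eq by simp
  finally show "m q (m e g) = q" .
qed

lemma R_idems_mult:
  assumes mem: "f \<in> ES" "h \<in> ES" "s \<in> E0" "t \<in> E0"
    and eq: "m s f = f" "m f s = s" "m t h = h" "m h t = t" "m s t = s"
  shows "m s (m f h) = m f h \<and> m (m f h) s = s"
proof
  have "m s (m f h) = m (m s f) h" using mem by (simp add: assoc)
  then show "m s (m f h) = m f h" using eq by simp
  have ts: "m t s = s" using mem eq T.idems_commute by metis
  have "m (m f h) s = m (m f h) (m t s)" using ts by simp
  also have "\<dots> = m f (m (m h t) s)" using mem by (simp add: assoc)
  also have "\<dots> = s" using eq ts by simp
  finally show "m (m f h) s = s" .
qed

text \<open>Here admissibility enters: the transversal component of \<open>x g\<close> is \<open>x y\<close>.\<close>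

lemma idem_mult_L_transversal:
  assumes x: "x \<in> E0" and g: "g \<in> ES" and y: "y \<in> E0" and gy: "m g y = g" "m y g = y"
  shows "m (m x g) (m x y) = m x g \<and> m (m x y) (m x g) = m x y"
proof
  let ?a = "m x g" and ?xy = "m x y"
  have aS: "?a \<in> S" "?a \<in> ES" using x g by simp_all
  have xy: "?xy \<in> E0" using x y by simp
  have yx: "m y x = ?xy" using T.idems_commute x y by metis
  have tba: "tb ?a = ?xy"
    using tbar_mult[of x g] x g components_of_transversal[of x] components_of_L_idem[OF g y gy] by simp
  let ?t = "tF ?a"
  have tR: "m ?xy ?t = ?t" "m ?t ?xy = ?xy"
    using tf_R_star[OF aS(1)] tba T.star_of_idem[OF xy] by simp_all
  have tES: "?t \<in> ES" using tf_idem[OF aS(1)] .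
  have Ls: "Lstar S m ?a ?t" using decomp_Lstar[OF decomp_tbar[OF aS(1)]] .
  have at: "m ?a ?t = ?a" "m ?t ?a = ?t" using Lstar_idems[OF Ls aS(2) tES] by simp_all
  have ay: "m ?a y = ?a"
  proof -
    have "m ?a y = m x (m g y)" using x g y by (simp add: assoc)
    then show ?thesis using gy by simp
  qed
  have ty: "m ?t y = ?t"
  proof -
    have "m ?t y = m (m ?t ?a) y" using at by simp
    also have "\<dots> = m ?t (m ?a y)" using tES x g y by (simp add: assoc)
    also have "\<dots> = ?t" using ay at by simp
    finally show ?thesis .
  qed
  have tx: "m ?t x = ?xy"
  proof -
    have "m ?t x = m (m ?t y) x" using ty by simp
    also have "\<dots> = m ?t (m y x)" using tES x y by (simp add: assoc)
    finally show ?thesis using tR yx by simp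
  qed
  have "?t = m ?t ?a" using at by simp
  also have "\<dots> = m (m ?t x) g" using tES x g by (simp add: assoc)
  also have "\<dots> = m ?xy g" using tx by simp
  also have "\<dots> = m x (m y g)" using x y g by (simp add: assoc)
  also have "\<dots> = ?xy" using gy by simp
  finally have t: "?t = ?xy" .
  show "m ?a ?xy = ?a" using at t by simp
  have "m ?xy ?a = m x (m (m y x) g)" using x y g by (simp add: assoc)
  also have "\<dots> = m x (m ?xy g)" using yx by simp
  also have "\<dots> = m (m x x) (m y g)" using x y g by (simp add: assoc)
  also have "\<dots> = ?xy" using x gy T.idem by simp
  finally show "m ?xy ?a = ?xy" .
qed

lemma idem_mult_R_transversal:
  assumes x: "x \<in> E0" and g: "g \<in> ES" and y: "y \<in> E0" and gy: "m y g = g" "m g y = y"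
  shows "m (m x y) (m g x) = m g x \<and> m (m g x) (m x y) = m x y"
proof
  let ?a = "m g x" and ?xy = "m x y"
  have aS: "?a \<in> S" "?a \<in> ES" using x g by simp_all
  have xy: "?xy \<in> E0" using x y by simp
  have yx: "m y x = ?xy" using T.idems_commute x y by metis
  have tba: "tb ?a = ?xy"
    using tbar_mult[of g x] x g components_of_transversal[of x] components_of_R_idem[OF g y gy] yx by simp
  let ?k = "tE ?a"
  have kL: "m ?k ?xy = ?k" "m ?xy ?k = ?xy"
    using te_L_plus[OF aS(1)] tba T.plus_of_idem[OF xy] by simp_all
  have kES: "?k \<in> ES" using te_idem[OF aS(1)] .
  have Rs: "Rstar S m ?a ?k" using decomp_Rstar[OF decomp_tbar[OF aS(1)]] .
  have ak: "m ?k ?a = ?a" "m ?a ?k = ?k" using Rstar_idems[OF Rs aS(2) kES] by simp_all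
  have ya: "m y ?a = ?a"
  proof -
    have "m y ?a = m (m y g) x" using x g y by (simp add: assoc)
    then show ?thesis using gy by simp
  qed
  have yk: "m y ?k = ?k"
  proof -
    have "m y ?k = m y (m ?a ?k)" using ak by simp
    also have "\<dots> = m (m y ?a) ?k" using kES x g y by (simp add: assoc)
    also have "\<dots> = ?k" using ya ak by simp
    finally show ?thesis .
  qed
  have xk: "m x ?k = ?xy"
  proof -
    have "m x ?k = m x (m y ?k)" using yk by simp
    also have "\<dots> = m ?xy ?k" using kES x y by (simp add: assoc)
    finally show ?thesis using kL by simp
  qed
  have "?k = m ?a ?k" using ak by simp
  also have "\<dots> = m g (m x ?k)" using kES x g by (simp add: assoc)
  also have "\<dots> = m g (m y x)" using xk yx by simp
  also have "\<dots> = m (m g y) x" using x y g by (simp add: assoc)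
  also have "\<dots> = ?xy" using gy yx by simp
  finally have k: "?k = ?xy" .
  show "m ?xy ?a = ?a" using ak k by simp
  have "m ?a ?xy = m g (m (m x x) y)" using x y g by (simp add: assoc)
  also have "\<dots> = m g (m y x)" using x T.idem yx by simp
  also have "\<dots> = m (m g y) x" using x y g by (simp add: assoc)
  also have "\<dots> = ?xy" using gy yx by simp
  finally show "m ?a ?xy = ?xy" .
qed

lemma IS_idems: "e \<in> IS \<Longrightarrow> e \<in> ES" using IS_iff by blast
lemma LS_idems: "e \<in> LS \<Longrightarrow> e \<in> ES" using LS_iff by blast
lemma E0_in_IS: "z \<in> E0 \<Longrightarrow> z \<in> IS" using IS_iff T.idem by fastforce
lemma E0_in_LS: "z \<in> E0 \<Longrightarrow> z \<in> LS" using LS_iff T.idem by fastforce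

lemma IS_mult_L:
  assumes e: "e \<in> ES" "z \<in> E0" "m e z = e" "m z e = z"
    and g: "g \<in> ES" "y \<in> E0" "m g y = g" "m y g = y"
  shows "m (m e g) (m z y) = m e g \<and> m (m z y) (m e g) = m z y \<and> m (m e g) e = m e g"
proof -
  have A: "m (m z g) (m z y) = m z g" "m (m z y) (m z g) = m z y"
    using idem_mult_L_transversal[OF e(2) g] by simp_all
  have zy: "m z y \<in> E0" using e g by simp
  have K: "m (m e (m z g)) (m z y) = m e (m z g) \<and> m (m z y) (m e (m z g)) = m z y"
    using L_idems_mult[OF e(1) _ e(2) zy e(3,4) A T.idems_absorb(1)[OF e(2) g(2)]] e g by simp
  have eg: "m e g = m e (m z g)"
  proof -
    have "m e g = m (m e z) g" using e by simp
    also have "\<dots> = m e (m z g)" using e(1,2) g(1,2) by (simp add: assoc)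
    finally show ?thesis .
  qed
  have zgz: "m (m z g) z = m z g"
  proof -
    have "m (m z g) z = m (m (m z g) (m z y)) z" using A by simp
    also have "\<dots> = m (m z g) (m (m z y) z)" using e(1,2) g(1,2) by (simp add: assoc)
    also have "\<dots> = m (m z g) (m z y)" using T.idems_absorb[OF e(2) g(2)] by simp
    finally show ?thesis using A by simp
  qed
  have zge: "m (m z g) e = m z g"
  proof -
    have "m (m z g) e = m (m (m z g) z) e" using zgz by simp
    also have "\<dots> = m (m z g) (m z e)" using e(1,2) g(1,2) by (simp add: assoc)
    finally show ?thesis using e zgz by simp
  qed
  have "m (m e g) e = m (m e (m z g)) e" using eg by simp
  also have "\<dots> = m e (m (m z g) e)" using e(1,2) g(1,2) by (simp add: assoc)
  also have "\<dots> = m e g" using zge eg by simp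
  finally show ?thesis using K eg by simp
qed

lemma IS_mult:
  assumes "e \<in> IS" "g \<in> IS" shows "m e g \<in> IS" "m (m e g) e = m e g"
proof -
  obtain z where e: "e \<in> ES" "z \<in> E0" "m e z = e" "m z e = z" using assms(1) IS_iff by blast
  obtain y where g: "g \<in> ES" "y \<in> E0" "m g y = g" "m y g = y" using assms(2) IS_iff by blast
  have "m (m e g) (m z y) = m e g \<and> m (m z y) (m e g) = m z y \<and> m (m e g) e = m e g"
    using IS_mult_L[OF e g] .
  then show "m e g \<in> IS" "m (m e g) e = m e g" using IS_iff e g by auto
qed

lemma LS_mult_R:
  assumes f: "f \<in> ES" "z \<in> E0" "m z f = f" "m f z = z"
    and h: "h \<in> ES" "y \<in> E0" "m y h = h" "m h y = y"
  shows "m (m y z) (m f h) = m f h \<and> m (m f h) (m y z) = m y z \<and> m (m f h) f = m h f"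
proof -
  have A: "m (m y z) (m f y) = m f y" "m (m f y) (m y z) = m y z"
    using idem_mult_R_transversal[OF h(2) f] by simp_all
  have yz: "m y z \<in> E0" using f h by simp
  have yzy: "m (m y z) y = m y z" using T.idems_absorb(1)[OF h(2) f(2)] .
  have K: "m (m y z) (m (m f y) h) = m (m f y) h \<and> m (m (m f y) h) (m y z) = m y z"
    using R_idems_mult[OF _ h(1) yz h(2) A h(3,4) yzy] f h by simp
  have fh: "m f h = m (m f y) h"
  proof -
    have "m f h = m f (m y h)" using h by simp
    also have "\<dots> = m (m f y) h" using f(1,2) h(1,2) by (simp add: assoc)
    finally show ?thesis .
  qed
  have A2: "m (m z y) (m h z) = m h z" "m (m h z) (m z y) = m z y"
    using idem_mult_R_transversal[OF f(2) h] by simp_all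
  have zy: "m z y = m y z" using f h T.idems_commute by metis
  have fhz: "m f (m h z) = m h z"
  proof -
    have "m f (m h z) = m f (m (m z y) (m h z))" using A2 by simp
    also have "\<dots> = m (m (m f z) y) (m h z)" using f(1,2) h(1,2) by (simp add: assoc)
    also have "\<dots> = m (m z y) (m h z)" using f by simp
    finally show ?thesis using A2 by simp
  qed
  have "m (m f h) f = m (m f h) (m z f)" using f by simp
  also have "\<dots> = m (m f (m h z)) f" using f(1,2) h(1,2) by (simp add: assoc)
  also have "\<dots> = m (m h z) f" using fhz by simp
  also have "\<dots> = m h (m z f)" using f(1,2) h(1,2) by (simp add: assoc)
  also have "\<dots> = m h f" using f by simp
  finally show ?thesis using K fh by simp
qed

lemma LS_mult:
  assumes "f \<in> LS" "h \<in> LS" shows "m f h \<in> LS" "m (m f h) f = m h f"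
proof -
  obtain z where f: "f \<in> ES" "z \<in> E0" "m z f = f" "m f z = z" using assms(1) LS_iff by blast
  obtain y where h: "h \<in> ES" "y \<in> E0" "m y h = h" "m h y = y" using assms(2) LS_iff by blast
  have "m (m y z) (m f h) = m f h \<and> m (m f h) (m y z) = m y z \<and> m (m f h) f = m h f"
    using LS_mult_R[OF f h] .
  then show "m f h \<in> LS" "m (m f h) f = m h f" using LS_iff f h by auto
qed

lemma left_regular_band_IS: "left_regular_band IS m"
  unfolding left_regular_band_def band_def sgrp_def
  using IS_mult IS_idems idem by (auto simp: assoc)

lemma right_regular_band_LS: "right_regular_band LS m"
  unfolding right_regular_band_def band_def sgrp_def
  using LS_mult LS_idems idem by (auto simp: assoc)

lemma sgrp_IS: "sgrp IS m" using left_regular_band_IS by (simp add: left_regular_band_def band_def)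
lemma sgrp_LS: "sgrp LS m"
  using right_regular_band_LS by (simp add: right_regular_band_def band_def)

lemma IS_idem: "e \<in> IS \<Longrightarrow> e \<in> idems IS m" unfolding idems_def using idem[OF IS_idems] by blast
lemma LS_idem: "e \<in> LS \<Longrightarrow> e \<in> idems LS m" unfolding idems_def using idem[OF LS_idems] by blast

lemma Lcl_IS_iff:
  assumes z: "z \<in> E0" shows "e \<in> Lcl IS m z \<longleftrightarrow> e \<in> IS \<and> m e z = e \<and> m z e = z"
proof (cases "e \<in> IS")
  case True
  have "GL IS m e z \<longleftrightarrow> m e z = e \<and> m z e = z"
    by (rule GL_idems_iff[OF sgrp_IS IS_idem[OF True] IS_idem[OF E0_in_IS[OF z]]])
  then show ?thesis using True by (simp add: Lcl_def)
next
  case False then show ?thesis by (simp add: Lcl_def GL_def)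
qed

lemma Rcl_LS_iff:
  assumes z: "z \<in> E0" shows "f \<in> Rcl LS m z \<longleftrightarrow> f \<in> LS \<and> m z f = f \<and> m f z = z"
proof (cases "f \<in> LS")
  case True
  have "GR LS m f z \<longleftrightarrow> m z f = f \<and> m f z = z"
    by (rule GR_idems_iff[OF sgrp_LS LS_idem[OF True] LS_idem[OF E0_in_LS[OF z]]])
  then show ?thesis using True by (simp add: Rcl_def)
next
  case False then show ?thesis by (simp add: Rcl_def GR_def)
qed

lemma IS_union: "IS = (\<Union>x\<in>E0. Lcl IS m x)"
proof
  show "IS \<subseteq> (\<Union>x\<in>E0. Lcl IS m x)"
  proof
    fix e assume e: "e \<in> IS"
    then obtain z where "z \<in> E0" "m e z = e" "m z e = z" using IS_iff by blast
    then show "e \<in> (\<Union>x\<in>E0. Lcl IS m x)" using Lcl_IS_iff e by blast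
  qed
  show "(\<Union>x\<in>E0. Lcl IS m x) \<subseteq> IS" using Lcl_IS_iff by blast
qed

lemma LS_union: "LS = (\<Union>x\<in>E0. Rcl LS m x)"
proof
  show "LS \<subseteq> (\<Union>x\<in>E0. Rcl LS m x)"
  proof
    fix e assume e: "e \<in> LS"
    then obtain z where "z \<in> E0" "m z e = e" "m e z = z" using LS_iff by blast
    then show "e \<in> (\<Union>x\<in>E0. Rcl LS m x)" using Rcl_LS_iff e by blast
  qed
  show "(\<Union>x\<in>E0. Rcl LS m x) \<subseteq> LS" using Rcl_LS_iff by blast
qed

lemma IS_inverse_unique:
  assumes e: "e \<in> ES" and z: "z \<in> E0" "m e z = e" "m z e = z"
    and y: "y \<in> E0" "m (m e y) e = e" "m (m y e) y = y"
  shows "y = z"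
proof -
  let ?w = "m z y"
  have w: "?w \<in> E0" using z y by simp
  have we: "m ?w e = z"
  proof -
    have "m z (m (m e y) e) = z" using y(2) z(3) by simp
    moreover have "m z (m (m e y) e) = m (m (m z e) y) e" using e z(1) y(1) by (simp add: assoc)
    ultimately show ?thesis using z(3) by simp
  qed
  have wz: "m ?w z = ?w" using T.idems_absorb(1)[OF z(1) y(1)] .
  have "?w = m ?w (m ?w e)" using wz we by simp
  also have "\<dots> = m (m ?w ?w) e" using w e by (simp add: assoc)
  also have "\<dots> = z" using we T.idem[OF w] by simp
  finally have zy: "m z y = z" by simp
  have yz_eq: "m y z = m y e"
  proof -
    have "m y z = m (m (m y e) y) z" using y(3) by simp
    also have "\<dots> = m (m y e) (m y z)" using e z(1) y(1) by (simp add: assoc)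
    also have "\<dots> = m (m y e) z" using zy T.idems_commute[OF y(1) z(1)] by simp
    also have "\<dots> = m y (m e z)" using e z(1) y(1) by (simp add: assoc)
    finally show ?thesis using z(2) by simp
  qed
  have "y = m (m y e) y" using y(3) by simp
  also have "\<dots> = m (m y z) y" using yz_eq by simp
  also have "\<dots> = m y z"
    using T.idems_absorb(3)[OF y(1) z(1)] T.idems_commute[OF y(1) z(1)] T.idems_absorb(1)[OF y(1) z(1)] by simp
  also have "\<dots> = z" using zy T.idems_commute[OF y(1) z(1)] by simp
  finally show ?thesis .
qed

lemma LS_inverse_unique:
  assumes f: "f \<in> ES" and z: "z \<in> E0" "m z f = f" "m f z = z"
    and y: "y \<in> E0" "m (m f y) f = f" "m (m y f) y = y"
  shows "y = z"
proof -
  let ?w = "m y z"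
  have w: "?w \<in> E0" using z y by simp
  have fw: "m f ?w = z"
  proof -
    have "m (m (m f y) f) z = z" using y(2) z(3) by simp
    moreover have "m (m (m f y) f) z = m f (m y (m f z))" using f z(1) y(1) by (simp add: assoc)
    ultimately show ?thesis using z(3) f z(1) y(1) by (simp add: assoc)
  qed
  have zw: "m z ?w = ?w" using T.idems_absorb(4)[OF z(1) y(1)] .
  have "?w = m (m f ?w) ?w" using zw fw by simp
  also have "\<dots> = m f (m ?w ?w)" using w f by (simp add: assoc)
  also have "\<dots> = z" using fw T.idem[OF w] by simp
  finally have yz: "m y z = z" by simp
  have zy_eq: "m z y = m f y"
  proof -
    have "m z y = m z (m (m y f) y)" using y(3) by simp
    also have "\<dots> = m (m z y) (m f y)" using f z(1) y(1) by (simp add: assoc)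
    also have "\<dots> = m z (m f y)" using yz T.idems_commute[OF y(1) z(1)] by simp
    also have "\<dots> = m (m z f) y" using f z(1) y(1) by (simp add: assoc)
    finally show ?thesis using z(2) by simp
  qed
  have "y = m y (m f y)" using y(3) f y(1) by (simp add: assoc)
  also have "\<dots> = m y (m z y)" using zy_eq by simp
  also have "\<dots> = m z y" using T.idems_absorb(4)[OF y(1) z(1)] by simp
  also have "\<dots> = z" using yz T.idems_commute[OF y(1) z(1)] by simp
  finally show ?thesis .
qed

lemma semilattice_transversal_IS: "semilattice_transversal IS m E0"
  unfolding semilattice_transversal_def
proof (intro conjI ballI)
  show "E0 \<subseteq> IS" using E0_in_IS by blast
  fix x y assume "x \<in> E0" "y \<in> E0"
  then show "m x y \<in> E0" "m x y = m y x" using T.idems_commute by simp_all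
next
  fix e assume e: "e \<in> IS"
  then obtain z where z: "z \<in> E0" "m e z = e" "m z e = z" using IS_iff by blast
  have eE: "e \<in> ES" using IS_idems[OF e] .
  show "\<exists>!e0. e0 \<in> E0 \<and> inverse_in m e e0"
  proof
    show "z \<in> E0 \<and> inverse_in m e z" using z eE idem T.idem by (simp add: inverse_in_def)
    fix y assume "y \<in> E0 \<and> inverse_in m e y"
    then show "y = z" using IS_inverse_unique[OF eE z] by (simp add: inverse_in_def)
  qed
qed

lemma semilattice_transversal_LS: "semilattice_transversal LS m E0"
  unfolding semilattice_transversal_def
proof (intro conjI ballI)
  show "E0 \<subseteq> LS" using E0_in_LS by blast
  fix x y assume "x \<in> E0" "y \<in> E0"
  then show "m x y \<in> E0" "m x y = m y x" using T.idems_commute by simp_all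
next
  fix e assume e: "e \<in> LS"
  then obtain z where z: "z \<in> E0" "m z e = e" "m e z = z" using LS_iff by blast
  have eE: "e \<in> ES" using LS_idems[OF e] .
  show "\<exists>!e0. e0 \<in> E0 \<and> inverse_in m e e0"
  proof
    show "z \<in> E0 \<and> inverse_in m e z" using z eE idem T.idem by (simp add: inverse_in_def)
    fix y assume "y \<in> E0 \<and> inverse_in m e y"
    then show "y = z" using LS_inverse_unique[OF eE z] by (simp add: inverse_in_def)
  qed
qed

definition alphaS :: "'a \<Rightarrow> 'a \<Rightarrow> 'a \<Rightarrow> 'a \<Rightarrow> 'a" where
  "alphaS x y f g = tE (m (m (m x f) g) y)"

definition betaS :: "'a \<Rightarrow> 'a \<Rightarrow> 'a \<Rightarrow> 'a \<Rightarrow> 'a" where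
  "betaS x y f g = tF (m (m (m x f) g) y)"

lemma te_in_IS: "x \<in> S \<Longrightarrow> tE x \<in> IS" by (simp add: IS_def Iset_def)
lemma tf_in_LS: "x \<in> S \<Longrightarrow> tF x \<in> LS" by (simp add: LS_def Lamset_def)

lemma alphaS_betaS_decomp:
  assumes x: "x \<in> T" and y: "y \<in> T"
    and f: "f \<in> ES" "m (T.st x) f = f" "m f (T.st x) = T.st x"
    and g: "g \<in> ES" "m g (T.pl y) = g" "m (T.pl y) g = T.pl y"
  shows "tb (m (m (m x f) g) y) = m x y"
    "m (m (m x f) g) y = m (m (alphaS x y f g) (m x y)) (betaS x y f g)"
    "alphaS x y f g \<in> ES" "betaS x y f g \<in> ES" "alphaS x y f g \<in> IS" "betaS x y f g \<in> LS"
    "m (alphaS x y f g) (T.pl (m x y)) = alphaS x y f g" "m (T.pl (m x y)) (alphaS x y f g) = T.pl (m x y)"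
    "m (T.st (m x y)) (betaS x y f g) = betaS x y f g" "m (betaS x y f g) (T.st (m x y)) = T.st (m x y)"
proof -
  let ?P = "m (m (m x f) g) y"
  have PS: "?P \<in> S" using x y f g by simp
  have tf: "tb f = T.st x" using components_of_R_idem[OF f(1) T.star_idem[OF x] f(2,3)] by simp
  have tg: "tb g = T.pl y" using components_of_L_idem[OF g(1) T.plus_idem[OF y] g(2,3)] by simp
  have "tb ?P = m (m (m (tb x) (tb f)) (tb g)) (tb y)"
    using tbar_mult x y f g by simp
  also have "\<dots> = m (m (m x (T.st x)) (T.pl y)) y" using tf tg components_of_transversal x y by simp
  also have "\<dots> = m (m x (T.pl y)) y" using T.star_right x by simp
  also have "\<dots> = m x (m (T.pl y) y)" using x y by (simp add: assoc)
  also have "\<dots> = m x y" using T.plus_left y by simp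
  finally show tP: "tb ?P = m x y" .
  show "?P = m (m (alphaS x y f g) (m x y)) (betaS x y f g)"
    using te_tbar_tf[OF PS] tP by (simp add: alphaS_def betaS_def)
  show "alphaS x y f g \<in> ES" "betaS x y f g \<in> ES" "alphaS x y f g \<in> IS" "betaS x y f g \<in> LS"
    using te_idem[OF PS] tf_idem[OF PS] te_in_IS[OF PS] tf_in_LS[OF PS] by (simp_all add: alphaS_def betaS_def)
  show "m (alphaS x y f g) (T.pl (m x y)) = alphaS x y f g" "m (T.pl (m x y)) (alphaS x y f g) = T.pl (m x y)"
    "m (T.st (m x y)) (betaS x y f g) = betaS x y f g" "m (betaS x y f g) (T.st (m x y)) = T.st (m x y)"
    using te_L_plus[OF PS] tf_R_star[OF PS] tP by (simp_all add: alphaS_def betaS_def)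
qed

lemma alphaS_betaS_in: "\<forall>x\<in>T. \<forall>y\<in>T. \<forall>f\<in>Rcl LS m (T.st x). \<forall>g\<in>Lcl IS m (T.pl y).
        alphaS x y f g \<in> Lcl IS m (T.pl (m x y)) \<and> betaS x y f g \<in> Rcl LS m (T.st (m x y))"
proof (intro ballI)
  fix x y f g assume x: "x \<in> T" and y: "y \<in> T" and f: "f \<in> Rcl LS m (T.st x)" and g: "g \<in> Lcl IS m (T.pl y)"
  have f': "f \<in> ES" "m (T.st x) f = f" "m f (T.st x) = T.st x"
    using f Rcl_LS_iff[of "T.st x" f] x LS_idems by auto
  have g': "g \<in> ES" "m g (T.pl y) = g" "m (T.pl y) g = T.pl y"
    using g Lcl_IS_iff[of "T.pl y" g] y IS_idems by auto
  note W = alphaS_betaS_decomp[OF x y f' g']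
  show "alphaS x y f g \<in> Lcl IS m (T.pl (m x y)) \<and> betaS x y f g \<in> Rcl LS m (T.st (m x y))"
    using W Lcl_IS_iff[of "T.pl (m x y)"] Rcl_LS_iff[of "T.st (m x y)"] x y by simp
qed

lemma alphaS_betaS_condition2:
  "\<forall>x\<in>T. \<forall>y\<in>T. alphaS x y (T.st x) (T.pl y) = T.pl (m x y) \<and> betaS x y (T.st x) (T.pl y) = T.st (m x y)"
proof (intro ballI)
  fix x y assume x: "x \<in> T" and y: "y \<in> T"
  have "m (m (m x (T.st x)) (T.pl y)) y = m x y"
    using x y T.star_right T.plus_left by (simp add: assoc)
  then show "alphaS x y (T.st x) (T.pl y) = T.pl (m x y) \<and> betaS x y (T.st x) (T.pl y) = T.st (m x y)"
    using components_of_transversal[of "m x y"] x y by (simp add: alphaS_def betaS_def)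
qed

lemma Rcl_LS_D: "x \<in> T \<Longrightarrow> f \<in> Rcl LS m (T.st x) \<Longrightarrow> f \<in> ES \<and> m (T.st x) f = f \<and> m f (T.st x) = T.st x"
  using Rcl_LS_iff[of "T.st x" f] LS_idems by auto
lemma Lcl_IS_D: "y \<in> T \<Longrightarrow> g \<in> Lcl IS m (T.pl y) \<Longrightarrow> g \<in> ES \<and> m g (T.pl y) = g \<and> m (T.pl y) g = T.pl y"
  using Lcl_IS_iff[of "T.pl y" g] IS_idems by auto

text \<open>Condition 1 is associativity: the product \<open>x f g y h k z\<close> is decomposed once from the
  left and once from the right, and the two decompositions agree by uniqueness.\<close>

lemma decomp_product_left:
  assumes x: "x \<in> T" and y: "y \<in> T" and z: "z \<in> T"
    and f: "f \<in> ES" "m (T.st x) f = f" "m f (T.st x) = T.st x"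
    and g: "g \<in> ES" "m g (T.pl y) = g" "m (T.pl y) g = T.pl y"
    and h: "h \<in> ES" "m (T.st y) h = h" "m h (T.st y) = T.st y"
    and k: "k \<in> ES" "m k (T.pl z) = k" "m (T.pl z) k = T.pl z"
  defines "P \<equiv> m (m (m (m (m (m x f) g) y) h) k) z"
  shows "tE P = m (alphaS x y f g) (alphaS (m x y) z (m (betaS x y f g) h) k)"
    "tF P = betaS (m x y) z (m (betaS x y f g) h) k"
proof -
  have xy: "m x y \<in> T" and xyz: "m (m x y) z \<in> T" using x y z by simp_all
  note W1 = alphaS_betaS_decomp[OF x y f g]
  let ?A1 = "alphaS x y f g" and ?B1 = "betaS x y f g" and ?h2 = "m (betaS x y f g) h"
  have h2: "?h2 \<in> ES" "m (T.st (m x y)) ?h2 = ?h2" "m ?h2 (T.st (m x y)) = T.st (m x y)"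
    using R_idems_mult[OF W1(4) h(1) T.star_idem[OF xy] T.star_idem[OF y] W1(9,10) h(2,3) T.star_mult(1)[OF x y]]
      W1(4) h(1) by simp_all
  note W2 = alphaS_betaS_decomp[OF xy z h2 k]
  let ?A2 = "alphaS (m x y) z ?h2 k" and ?B2 = "betaS (m x y) z ?h2 k"
  have mem: "x \<in> S" "y \<in> S" "z \<in> S" "f \<in> S" "g \<in> S" "h \<in> S" "k \<in> S"
    "?A1 \<in> S" "?B1 \<in> S" "?A2 \<in> S" "?B2 \<in> S"
    using x y z f g h k W1 W2 by simp_all
  have "P = m (m (m (m x f) g) y) (m (m h k) z)" using mem by (simp add: P_def assoc)
  also have "\<dots> = m (m (m ?A1 (m x y)) ?B1) (m (m h k) z)" using W1(2) by simp
  also have "\<dots> = m ?A1 (m (m (m (m x y) ?h2) k) z)" using mem by (simp add: assoc)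
  also have "\<dots> = m ?A1 (m (m ?A2 (m (m x y) z)) ?B2)" using W2(2) by simp
  also have "\<dots> = m (m (m ?A1 ?A2) (m (m x y) z)) ?B2" using mem by (simp add: assoc)
  finally have P: "P = m (m (m ?A1 ?A2) (m (m x y) z)) ?B2" .
  have "m (m ?A1 ?A2) (T.pl (m (m x y) z)) = m ?A1 ?A2 \<and>
      m (T.pl (m (m x y) z)) (m ?A1 ?A2) = T.pl (m (m x y) z)"
    by (rule L_idems_mult[OF W1(3) W2(3) T.plus_idem[OF xy] T.plus_idem[OF xyz] W1(7,8) W2(7,8)
          T.plus_mult(2)[OF xy z]])
  then show "tE P = m ?A1 ?A2" "tF P = ?B2"
    using components_eq[OF xyz _ W2(4)] W2(9,10) W1(3) W2(3) P by simp_all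
qed

lemma decomp_product_right:
  assumes x: "x \<in> T" and y: "y \<in> T" and z: "z \<in> T"
    and f: "f \<in> ES" "m (T.st x) f = f" "m f (T.st x) = T.st x"
    and g: "g \<in> ES" "m g (T.pl y) = g" "m (T.pl y) g = T.pl y"
    and h: "h \<in> ES" "m (T.st y) h = h" "m h (T.st y) = T.st y"
    and k: "k \<in> ES" "m k (T.pl z) = k" "m (T.pl z) k = T.pl z"
  defines "P \<equiv> m (m (m (m (m (m x f) g) y) h) k) z"
  shows "tE P = alphaS x (m y z) f (m g (alphaS y z h k))"
    "tF P = m (betaS x (m y z) f (m g (alphaS y z h k))) (betaS y z h k)"
proof -
  have yz: "m y z \<in> T" and xyz: "m x (m y z) \<in> T" using x y z by simp_all
  note W3 = alphaS_betaS_decomp[OF y z h k]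
  let ?A3 = "alphaS y z h k" and ?B3 = "betaS y z h k" and ?g2 = "m g (alphaS y z h k)"
  have g2: "?g2 \<in> ES" "m ?g2 (T.pl (m y z)) = ?g2" "m (T.pl (m y z)) ?g2 = T.pl (m y z)"
    using L_idems_mult[OF g(1) W3(3) T.plus_idem[OF y] T.plus_idem[OF yz] g(2,3) W3(7,8) T.plus_mult(2)[OF y z]]
      g(1) W3(3) by simp_all
  note W4 = alphaS_betaS_decomp[OF x yz f g2]
  let ?A4 = "alphaS x (m y z) f ?g2" and ?B4 = "betaS x (m y z) f ?g2"
  have mem: "x \<in> S" "y \<in> S" "z \<in> S" "f \<in> S" "g \<in> S" "h \<in> S" "k \<in> S"
    "?A3 \<in> S" "?B3 \<in> S" "?A4 \<in> S" "?B4 \<in> S"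
    using x y z f g h k W3 W4 by simp_all
  have "P = m (m (m x f) g) (m (m (m y h) k) z)" using mem by (simp add: P_def assoc)
  also have "\<dots> = m (m (m x f) g) (m (m ?A3 (m y z)) ?B3)" using W3(2) by simp
  also have "\<dots> = m (m (m (m x f) ?g2) (m y z)) ?B3" using mem by (simp add: assoc)
  also have "\<dots> = m (m (m ?A4 (m x (m y z))) ?B4) ?B3" using W4(2) by simp
  also have "\<dots> = m (m ?A4 (m x (m y z))) (m ?B4 ?B3)" using mem by (simp add: assoc)
  finally have P: "P = m (m ?A4 (m x (m y z))) (m ?B4 ?B3)" .
  have "m (T.st (m x (m y z))) (m ?B4 ?B3) = m ?B4 ?B3 \<and>
      m (m ?B4 ?B3) (T.st (m x (m y z))) = T.st (m x (m y z))"
    by (rule R_idems_mult[OF W4(4) W3(4) T.star_idem[OF xyz] T.star_idem[OF yz] W4(9,10) W3(9,10)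
          T.star_mult(1)[OF x yz]])
  then show "tE P = ?A4" "tF P = m ?B4 ?B3"
    using components_eq[OF xyz W4(3)] W4(7,8) W4(4) W3(4) P by simp_all
qed

lemma alphaS_betaS_condition1: "\<forall>x\<in>T. \<forall>y\<in>T. \<forall>z\<in>T. \<forall>f\<in>Rcl LS m (T.st x). \<forall>g\<in>Lcl IS m (T.pl y).
   \<forall>h\<in>Rcl LS m (T.st y). \<forall>k\<in>Lcl IS m (T.pl z).
        m (alphaS x y f g) (alphaS (m x y) z (m (betaS x y f g) h) k)
          = alphaS x (m y z) f (m g (alphaS y z h k)) \<and>
        m (betaS x (m y z) f (m g (alphaS y z h k))) (betaS y z h k)
          = betaS (m x y) z (m (betaS x y f g) h) k"
proof (intro ballI)
  fix x y z f g h k assume x: "x \<in> T" and y: "y \<in> T" and z: "z \<in> T"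
    and f: "f \<in> Rcl LS m (T.st x)" and g: "g \<in> Lcl IS m (T.pl y)"
    and h: "h \<in> Rcl LS m (T.st y)" and k: "k \<in> Lcl IS m (T.pl z)"
  note idems = Rcl_LS_D[OF x f] Lcl_IS_D[OF y g] Rcl_LS_D[OF y h] Lcl_IS_D[OF z k]
  show "m (alphaS x y f g) (alphaS (m x y) z (m (betaS x y f g) h) k)
          = alphaS x (m y z) f (m g (alphaS y z h k)) \<and>
        m (betaS x (m y z) f (m g (alphaS y z h k))) (betaS y z h k)
          = betaS (m x y) z (m (betaS x y f g) h) k"
    using decomp_product_left[OF x y z] decomp_product_right[OF x y z] idems by simp
qed

lemma condition3_products:
  assumes x: "x \<in> T" and xi: "xi \<in> T"
    and ei: "ei \<in> ES" "m ei (T.pl xi) = ei" "m (T.pl xi) ei = T.pl xi"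
    and fi: "fi \<in> ES" "m (T.st xi) fi = fi" "m fi (T.st xi) = T.st xi"
    and e: "e \<in> ES" "m e (T.pl x) = e" "m (T.pl x) e = T.pl x"
  shows "m (m (m ei xi) fi) (m (m e x) (T.st x)) =
      m (m (m ei (alphaS xi x fi e)) (m xi x)) (m (betaS xi x fi e) (T.st x))"
    "tE (m (m (m ei xi) fi) e) = m ei (alphaS xi (T.pl x) fi e)"
    "tb (m (m (m ei xi) fi) e) = m xi (T.pl x)"
    "tF (m (m (m ei xi) fi) e) = betaS xi (T.pl x) fi e"
proof -
  note W = alphaS_betaS_decomp[OF xi x fi e]
  have px: "T.pl x \<in> T" using x by simp
  have e': "e \<in> ES" "m e (T.pl (T.pl x)) = e" "m (T.pl (T.pl x)) e = T.pl (T.pl x)"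
    using e T.plus_of_idem[OF T.plus_idem[OF x]] by simp_all
  note W' = alphaS_betaS_decomp[OF xi px fi e']
  have mem: "x \<in> S" "xi \<in> S" "ei \<in> S" "fi \<in> S" "e \<in> S" "T.pl x \<in> S" "T.st x \<in> S"
    "alphaS xi x fi e \<in> S" "betaS xi x fi e \<in> S" "alphaS xi (T.pl x) fi e \<in> S" "betaS xi (T.pl x) fi e \<in> S"
    using x xi ei fi e W W' by simp_all
  have "m (m (m ei xi) fi) (m (m e x) (T.st x)) = m (m ei (m (m (m xi fi) e) x)) (T.st x)"
    using mem by (simp add: assoc)
  also have "\<dots> = m (m ei (m (m (alphaS xi x fi e) (m xi x)) (betaS xi x fi e))) (T.st x)"
    using W(2) by simp
  also have "\<dots> = m (m (m ei (alphaS xi x fi e)) (m xi x)) (m (betaS xi x fi e) (T.st x))"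
    using mem by (simp add: assoc)
  finally show "m (m (m ei xi) fi) (m (m e x) (T.st x)) =
      m (m (m ei (alphaS xi x fi e)) (m xi x)) (m (betaS xi x fi e) (T.st x))" .
  have "m (m (m ei xi) fi) e = m (m (m ei xi) fi) (m e (T.pl x))" using e by simp
  also have "\<dots> = m ei (m (m (m xi fi) e) (T.pl x))" using mem by (simp add: assoc)
  also have "\<dots> = m ei (m (m (alphaS xi (T.pl x) fi e) (m xi (T.pl x))) (betaS xi (T.pl x) fi e))"
    using W'(2) by simp
  also have "\<dots> = m (m (m ei (alphaS xi (T.pl x) fi e)) (m xi (T.pl x))) (betaS xi (T.pl x) fi e)"
    using mem by (simp add: assoc)
  finally have U: "m (m (m ei xi) fi) e =
      m (m (m ei (alphaS xi (T.pl x) fi e)) (m xi (T.pl x))) (betaS xi (T.pl x) fi e)" .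
  have xpx: "m xi (T.pl x) \<in> T" using xi x by simp
  have K: "m (m ei (alphaS xi (T.pl x) fi e)) (T.pl (m xi (T.pl x))) = m ei (alphaS xi (T.pl x) fi e) \<and>
     m (T.pl (m xi (T.pl x))) (m ei (alphaS xi (T.pl x) fi e)) = T.pl (m xi (T.pl x))"
    by (rule L_idems_mult[OF ei(1) W'(3) T.plus_idem[OF xi] T.plus_idem[OF xpx] ei(2,3) W'(7,8)
          T.plus_mult(2)[OF xi px]])
  have "tb (m (m (m ei xi) fi) e) = m xi (T.pl x) \<and> tE (m (m (m ei xi) fi) e) = m ei (alphaS xi (T.pl x) fi e)
      \<and> tF (m (m (m ei xi) fi) e) = betaS xi (T.pl x) fi e"
    unfolding U using components_eq[OF xpx _ W'(4) _ _ W'(9,10)] K ei(1) W'(3) by simp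
  then show "tE (m (m (m ei xi) fi) e) = m ei (alphaS xi (T.pl x) fi e)"
    "tb (m (m (m ei xi) fi) e) = m xi (T.pl x)"
    "tF (m (m (m ei xi) fi) e) = betaS xi (T.pl x) fi e" by simp_all
qed

text \<open>Under the hypothesis of condition 3 the elements \<open>e\<^sub>i x\<^sub>i f\<^sub>i\<close> agree after right multiplication
  by \<open>e x x\<^sup>*\<close>; since \<open>e x x\<^sup>* \<R>\<^sup>* e\<close> they agree after multiplication by \<open>e\<close>, and the conclusion
  compares the components of these products. Condition 4 is dual.\<close>

lemma alphaS_betaS_condition3: "\<forall>x\<in>T. \<forall>x1\<in>T. \<forall>x2\<in>T. \<forall>e1\<in>Lcl IS m (T.pl x1). \<forall>f1\<in>Rcl LS m (T.st x1).
        \<forall>e2\<in>Lcl IS m (T.pl x2). \<forall>f2\<in>Rcl LS m (T.st x2). \<forall>e\<in>Lcl IS m (T.pl x).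
        m e1 (alphaS x1 x f1 e) = m e2 (alphaS x2 x f2 e) \<and> m x1 x = m x2 x \<and>
        m (betaS x1 x f1 e) (T.st x) = m (betaS x2 x f2 e) (T.st x) \<longrightarrow>
        m e1 (alphaS x1 (T.pl x) f1 e) = m e2 (alphaS x2 (T.pl x) f2 e) \<and> m x1 (T.pl x) = m x2 (T.pl x) \<and>
        betaS x1 (T.pl x) f1 e = betaS x2 (T.pl x) f2 e"
proof (intro ballI impI)
  fix x x1 x2 e1 f1 e2 f2 e assume x: "x \<in> T" and x1: "x1 \<in> T" and x2: "x2 \<in> T"
    and e10: "e1 \<in> Lcl IS m (T.pl x1)" and f10: "f1 \<in> Rcl LS m (T.st x1)"
    and e20: "e2 \<in> Lcl IS m (T.pl x2)" and f20: "f2 \<in> Rcl LS m (T.st x2)"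
    and e0: "e \<in> Lcl IS m (T.pl x)"
    and hyp: "m e1 (alphaS x1 x f1 e) = m e2 (alphaS x2 x f2 e) \<and> m x1 x = m x2 x \<and>
        m (betaS x1 x f1 e) (T.st x) = m (betaS x2 x f2 e) (T.st x)"
  have e1: "e1 \<in> ES" "m e1 (T.pl x1) = e1" "m (T.pl x1) e1 = T.pl x1"
    using Lcl_IS_D[OF x1 e10] by auto
  have e2: "e2 \<in> ES" "m e2 (T.pl x2) = e2" "m (T.pl x2) e2 = T.pl x2"
    using Lcl_IS_D[OF x2 e20] by auto
  have e: "e \<in> ES" "m e (T.pl x) = e" "m (T.pl x) e = T.pl x" using Lcl_IS_D[OF x e0] by auto
  have f1: "f1 \<in> ES" "m (T.st x1) f1 = f1" "m f1 (T.st x1) = T.st x1"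
    using Rcl_LS_D[OF x1 f10] by auto
  have f2: "f2 \<in> ES" "m (T.st x2) f2 = f2" "m f2 (T.st x2) = T.st x2"
    using Rcl_LS_D[OF x2 f20] by auto
  note A1 = condition3_products[OF x x1 e1 f1 e] and A2 = condition3_products[OF x x2 e2 f2 e]
  let ?Q = "m (m e x) (T.st x)"
  have dQ: "decomp S m T ?Q e x (T.st x)"
    using x e T.idem[OF T.star_idem[OF x]] by (simp add: decomp_iff)
  have u1: "m (m e1 x1) f1 \<in> S" and u2: "m (m e2 x2) f2 \<in> S" using e1 e2 x1 x2 f1 f2 by simp_all
  have "m (m (m e1 x1) f1) ?Q = m (m (m e2 x2) f2) ?Q" using A1(1) A2(1) hyp by simp
  then have eq: "m (m (m e1 x1) f1) e = m (m (m e2 x2) f2) e"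
    using Rstar_cancel[OF decomp_Rstar[OF dQ] u1 u2] by simp
  show "m e1 (alphaS x1 (T.pl x) f1 e) = m e2 (alphaS x2 (T.pl x) f2 e) \<and> m x1 (T.pl x) = m x2 (T.pl x) \<and>
        betaS x1 (T.pl x) f1 e = betaS x2 (T.pl x) f2 e"
    using A1(2-4) A2(2-4) eq by metis
qed

lemma condition4_products:
  assumes x: "x \<in> T" and xi: "xi \<in> T"
    and ei: "ei \<in> ES" "m ei (T.pl xi) = ei" "m (T.pl xi) ei = T.pl xi"
    and fi: "fi \<in> ES" "m (T.st xi) fi = fi" "m fi (T.st xi) = T.st xi"
    and f: "f \<in> ES" "m (T.st x) f = f" "m f (T.st x) = T.st x"
  shows "m (m (m (T.pl x) x) f) (m (m ei xi) fi) =
      m (m (m (T.pl x) (alphaS x xi f ei)) (m x xi)) (m (betaS x xi f ei) fi)"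
    "tE (m f (m (m ei xi) fi)) = alphaS (T.st x) xi f ei"
    "tb (m f (m (m ei xi) fi)) = m (T.st x) xi"
    "tF (m f (m (m ei xi) fi)) = m (betaS (T.st x) xi f ei) fi"
proof -
  note W = alphaS_betaS_decomp[OF x xi f ei]
  have sx: "T.st x \<in> T" using x by simp
  have f': "f \<in> ES" "m (T.st (T.st x)) f = f" "m f (T.st (T.st x)) = T.st (T.st x)"
    using f T.star_of_idem[OF T.star_idem[OF x]] by simp_all
  note W' = alphaS_betaS_decomp[OF sx xi f' ei]
  have mem: "x \<in> S" "xi \<in> S" "ei \<in> S" "fi \<in> S" "f \<in> S" "T.pl x \<in> S" "T.st x \<in> S"
    "alphaS x xi f ei \<in> S" "betaS x xi f ei \<in> S" "alphaS (T.st x) xi f ei \<in> S" "betaS (T.st x) xi f ei \<in> S"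
    using x xi ei fi f W W' by simp_all
  have "m (m (m (T.pl x) x) f) (m (m ei xi) fi) = m (m (T.pl x) (m (m (m x f) ei) xi)) fi"
    using mem by (simp add: assoc)
  also have "\<dots> = m (m (T.pl x) (m (m (alphaS x xi f ei) (m x xi)) (betaS x xi f ei))) fi"
    using W(2) by simp
  also have "\<dots> = m (m (m (T.pl x) (alphaS x xi f ei)) (m x xi)) (m (betaS x xi f ei) fi)"
    using mem by (simp add: assoc)
  finally show "m (m (m (T.pl x) x) f) (m (m ei xi) fi) =
      m (m (m (T.pl x) (alphaS x xi f ei)) (m x xi)) (m (betaS x xi f ei) fi)" .
  have "m f (m (m ei xi) fi) = m (m (T.st x) f) (m (m ei xi) fi)" using f by simp
  also have "\<dots> = m (m (m (m (T.st x) f) ei) xi) fi" using mem by (simp add: assoc)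
  also have "\<dots> = m (m (m (alphaS (T.st x) xi f ei) (m (T.st x) xi)) (betaS (T.st x) xi f ei)) fi"
    using W'(2) by simp
  also have "\<dots> = m (m (alphaS (T.st x) xi f ei) (m (T.st x) xi)) (m (betaS (T.st x) xi f ei) fi)"
    using mem by (simp add: assoc)
  finally have U: "m f (m (m ei xi) fi) =
      m (m (alphaS (T.st x) xi f ei) (m (T.st x) xi)) (m (betaS (T.st x) xi f ei) fi)" .
  have sxi: "m (T.st x) xi \<in> T" using xi x by simp
  have K: "m (T.st (m (T.st x) xi)) (m (betaS (T.st x) xi f ei) fi) = m (betaS (T.st x) xi f ei) fi \<and>
     m (m (betaS (T.st x) xi f ei) fi) (T.st (m (T.st x) xi)) = T.st (m (T.st x) xi)"
    by (rule R_idems_mult[OF W'(4) fi(1) T.star_idem[OF sxi] T.star_idem[OF xi] W'(9,10) fi(2,3)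
          T.star_mult(1)[OF sx xi]])
  have "tb (m f (m (m ei xi) fi)) = m (T.st x) xi \<and> tE (m f (m (m ei xi) fi)) = alphaS (T.st x) xi f ei
      \<and> tF (m f (m (m ei xi) fi)) = m (betaS (T.st x) xi f ei) fi"
    unfolding U using components_eq[OF sxi W'(3) _ W'(7,8)] K fi(1) W'(4) by simp
  then show "tE (m f (m (m ei xi) fi)) = alphaS (T.st x) xi f ei"
    "tb (m f (m (m ei xi) fi)) = m (T.st x) xi"
    "tF (m f (m (m ei xi) fi)) = m (betaS (T.st x) xi f ei) fi" by simp_all
qed

lemma alphaS_betaS_condition4: "\<forall>x\<in>T. \<forall>x1\<in>T. \<forall>x2\<in>T. \<forall>e1\<in>Lcl IS m (T.pl x1). \<forall>f1\<in>Rcl LS m (T.st x1).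
        \<forall>e2\<in>Lcl IS m (T.pl x2). \<forall>f2\<in>Rcl LS m (T.st x2). \<forall>f\<in>Rcl LS m (T.st x).
        m (T.pl x) (alphaS x x1 f e1) = m (T.pl x) (alphaS x x2 f e2) \<and> m x x1 = m x x2 \<and>
        m (betaS x x1 f e1) f1 = m (betaS x x2 f e2) f2 \<longrightarrow>
        alphaS (T.st x) x1 f e1 = alphaS (T.st x) x2 f e2 \<and> m (T.st x) x1 = m (T.st x) x2 \<and>
        m (betaS (T.st x) x1 f e1) f1 = m (betaS (T.st x) x2 f e2) f2"
proof (intro ballI impI)
  fix x x1 x2 e1 f1 e2 f2 f assume x: "x \<in> T" and x1: "x1 \<in> T" and x2: "x2 \<in> T"
    and e10: "e1 \<in> Lcl IS m (T.pl x1)" and f10: "f1 \<in> Rcl LS m (T.st x1)"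
    and e20: "e2 \<in> Lcl IS m (T.pl x2)" and f20: "f2 \<in> Rcl LS m (T.st x2)"
    and f0: "f \<in> Rcl LS m (T.st x)"
    and hyp: "m (T.pl x) (alphaS x x1 f e1) = m (T.pl x) (alphaS x x2 f e2) \<and> m x x1 = m x x2 \<and>
        m (betaS x x1 f e1) f1 = m (betaS x x2 f e2) f2"
  have e1: "e1 \<in> ES" "m e1 (T.pl x1) = e1" "m (T.pl x1) e1 = T.pl x1"
    using Lcl_IS_D[OF x1 e10] by auto
  have e2: "e2 \<in> ES" "m e2 (T.pl x2) = e2" "m (T.pl x2) e2 = T.pl x2"
    using Lcl_IS_D[OF x2 e20] by auto
  have f: "f \<in> ES" "m (T.st x) f = f" "m f (T.st x) = T.st x" using Rcl_LS_D[OF x f0] by auto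
  have f1: "f1 \<in> ES" "m (T.st x1) f1 = f1" "m f1 (T.st x1) = T.st x1"
    using Rcl_LS_D[OF x1 f10] by auto
  have f2: "f2 \<in> ES" "m (T.st x2) f2 = f2" "m f2 (T.st x2) = T.st x2"
    using Rcl_LS_D[OF x2 f20] by auto
  note A1 = condition4_products[OF x x1 e1 f1 f] and A2 = condition4_products[OF x x2 e2 f2 f]
  let ?Q = "m (m (T.pl x) x) f"
  have dQ: "decomp S m T ?Q (T.pl x) x f"
    using x f T.idem[OF T.plus_idem[OF x]] by (simp add: decomp_iff)
  have u1: "m (m e1 x1) f1 \<in> S" and u2: "m (m e2 x2) f2 \<in> S" using e1 e2 x1 x2 f1 f2 by simp_all
  have "m ?Q (m (m e1 x1) f1) = m ?Q (m (m e2 x2) f2)" using A1(1) A2(1) hyp by (simp add: assoc)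
  then have eq: "m f (m (m e1 x1) f1) = m f (m (m e2 x2) f2)"
    using Lstar_cancel[OF decomp_Lstar[OF dQ] u1 u2] by simp
  show "alphaS (T.st x) x1 f e1 = alphaS (T.st x) x2 f e2 \<and> m (T.st x) x1 = m (T.st x) x2 \<and>
        m (betaS (T.st x) x1 f e1) f1 = m (betaS (T.st x) x2 f e2) f2"
    using A1(2-4) A2(2-4) eq by metis
qed

lemma construction_data_S: "construction_data T m IS m LS m alphaS betaS"
  unfolding construction_data_def Let_def
  using T.adequate left_regular_band_IS right_regular_band_LS IS_union LS_union E0_in_IS E0_in_LS
    semilattice_transversal_IS semilattice_transversal_LS alphaS_betaS_in alphaS_betaS_condition1
    alphaS_betaS_condition2 alphaS_betaS_condition3 alphaS_betaS_condition4
  by blast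

lemma W_S_mem_iff: "(e, x, f) \<in> Wset T m IS m LS m \<longleftrightarrow>
  e \<in> IS \<and> x \<in> T \<and> f \<in> LS \<and> e \<in> Lcl IS m (T.pl x) \<and> f \<in> Rcl LS m (T.st x)"
  by (simp add: Wset_def)

abbreviation "WS \<equiv> Wset T m IS m LS m"

definition triple_prod :: "'a \<times> 'a \<times> 'a \<Rightarrow> 'a" where
  "triple_prod = (\<lambda>(e, x, f). m (m e x) f)"

lemma components_triple_prod:
  assumes "(e, x, f) \<in> WS"
  shows "tb (triple_prod (e, x, f)) = x" "tE (triple_prod (e, x, f)) = e" "tF (triple_prod (e, x, f)) = f"
proof -
  have x: "x \<in> T" and "e \<in> Lcl IS m (T.pl x)" "f \<in> Rcl LS m (T.st x)"
    using assms W_S_mem_iff by auto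
  then show "tb (triple_prod (e, x, f)) = x" "tE (triple_prod (e, x, f)) = e" "tF (triple_prod (e, x, f)) = f"
    using components_eq[OF x] Lcl_IS_D Rcl_LS_D by (simp_all add: triple_prod_def)
qed

lemma bij_triple_prod: "bij_betw triple_prod WS S"
  unfolding bij_betw_def
proof
  show "inj_on triple_prod WS"
    using components_triple_prod by (intro inj_onI) (metis prod_cases3)
  show "triple_prod ` WS = S"
  proof
    show "triple_prod ` WS \<subseteq> S"
      using Lcl_IS_D Rcl_LS_D by (auto simp: Wset_def triple_prod_def)
    show "S \<subseteq> triple_prod ` WS"
    proof
      fix s assume s: "s \<in> S"
      have "(tE s, tb s, tF s) \<in> WS"
        using te_in_IS[OF s] tf_in_LS[OF s] tbar_in[OF s] te_L_plus[OF s] tf_R_star[OF s]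
          Lcl_IS_iff[OF T.plus_idem[OF tbar_in[OF s]]] Rcl_LS_iff[OF T.star_idem[OF tbar_in[OF s]]]
        by (simp add: W_S_mem_iff)
      moreover have "s = triple_prod (tE s, tb s, tF s)"
        using te_tbar_tf[OF s] by (simp add: triple_prod_def)
      ultimately show "s \<in> triple_prod ` WS" by blast
    qed
  qed
qed

lemma triple_prod_mult:
  assumes a: "(e, x, f) \<in> WS" and b: "(g, y, h) \<in> WS"
  shows "triple_prod (Wmult m m m alphaS betaS (e, x, f) (g, y, h)) =
    m (triple_prod (e, x, f)) (triple_prod (g, y, h))"
proof -
  have x: "x \<in> T" and e: "e \<in> Lcl IS m (T.pl x)" and f: "f \<in> Rcl LS m (T.st x)"
    and y: "y \<in> T" and g: "g \<in> Lcl IS m (T.pl y)" and h: "h \<in> Rcl LS m (T.st y)"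
    using a b W_S_mem_iff by auto
  have f': "f \<in> ES" "m (T.st x) f = f" "m f (T.st x) = T.st x" using Rcl_LS_D[OF x f] by auto
  have g': "g \<in> ES" "m g (T.pl y) = g" "m (T.pl y) g = T.pl y" using Lcl_IS_D[OF y g] by auto
  note W = alphaS_betaS_decomp[OF x y f' g']
  have mem: "x \<in> S" "y \<in> S" "e \<in> S" "f \<in> S" "g \<in> S" "h \<in> S"
    "alphaS x y f g \<in> S" "betaS x y f g \<in> S"
    using x y W Lcl_IS_D[OF x e] Rcl_LS_D[OF x f] Lcl_IS_D[OF y g] Rcl_LS_D[OF y h] by simp_all
  have "m (triple_prod (e, x, f)) (triple_prod (g, y, h)) = m (m e (m (m (m x f) g) y)) h"
    using mem by (simp add: assoc triple_prod_def)
  also have "\<dots> = m (m e (m (m (alphaS x y f g) (m x y)) (betaS x y f g))) h" using W(2) by simp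
  also have "\<dots> = triple_prod (Wmult m m m alphaS betaS (e, x, f) (g, y, h))"
    using mem by (simp add: assoc Wmult_def triple_prod_def)
  finally show ?thesis by simp
qed

lemma W_S_iso_S: "sgrp_iso WS (Wmult m m m alphaS betaS) S m"
  unfolding sgrp_iso_def
  using bij_triple_prod triple_prod_mult by (metis prod_cases3)

lemma isomorphic_to_construction:
  "\<exists>(S0::'a set) mS I mI L mL \<alpha> \<beta>.
     construction_data S0 mS I mI L mL \<alpha> \<beta> \<and> sgrp_iso (Wset S0 mS I mI L mL) (Wmult mS mI mL \<alpha> \<beta>) S m"
  using construction_data_S W_S_iso_S by blast

end

theorem theorem2p16:
  shows "(\<forall>(S0::'a set) mS I mI L mL \<alpha> \<beta>.
            construction_data S0 mS I mI L mL \<alpha> \<beta> \<longrightarrow>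
            quasi_adequate (Wset S0 mS I mI L mL) (Wmult mS mI mL \<alpha> \<beta>) \<and>
            (\<exists>T. admissible_transversal (Wset S0 mS I mI L mL) (Wmult mS mI mL \<alpha> \<beta>) T \<and>
                 sgrp_iso T (Wmult mS mI mL \<alpha> \<beta>) S0 mS \<and>
                 (condition5 S0 mS I mI L mL \<alpha> \<beta> \<longrightarrow>
                    sgrp_iso (Iset (Wset S0 mS I mI L mL) (Wmult mS mI mL \<alpha> \<beta>) T)
                             (Wmult mS mI mL \<alpha> \<beta>) I mI \<and>
                    sgrp_iso (Lamset (Wset S0 mS I mI L mL) (Wmult mS mI mL \<alpha> \<beta>) T)
                             (Wmult mS mI mL \<alpha> \<beta>) L mL))) \<and>
         (\<forall>(S::'c set) m T. admissible_transversal S m T \<longrightarrow>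
            (\<exists>(S0::'c set) mS I mI L mL \<alpha> \<beta>.
               construction_data S0 mS I mI L mL \<alpha> \<beta> \<and>
               sgrp_iso (Wset S0 mS I mI L mL) (Wmult mS mI mL \<alpha> \<beta>) S m))"
  using construction.W_quasi_adequate_with_transversal[OF construction.intro]
    admissible.isomorphic_to_construction[OF admissible.intro]
  by blast

end
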